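(* Let $e_i=R(e_{i-1},\varepsilon_i)$ with $R$ measurable and $(\varepsilon_i)$ i.i.d., and assume there exist $q>0$ and $t_0$ such that $E(\log\ell_{\varepsilon_0})<0$ and $\ell_{\varepsilon_0}+|R(t_0,\varepsilon_0)|\in\mathcal L^q$, where $\ell_{\varepsilon_0}=\sup_{x\ne x'}|R(x,\varepsilon_0)-R(x',\varepsilon_0)|/|x-x'|$ (so that $e_i=G(\mathcal F_i)$ is the stationary solution). Let $F_1(u\mid v)=\mathbb P[R(v,\varepsilon_0)\le u]$ and $F_1^{(l)}(u\mid v)=\partial^lF_1(u\mid v)/\partial u^l$. Assume there is $C_0<\infty$ with $$\sup_{u,v}\Big|\frac{\partial F_1^{(l)}(u\mid v)}{\partial v}\Big|+\sup_{u,v}|F_1^{(l)}(u\mid v)|<C_0,\qquad l=0,\dots,p.$$ Then there is $\chi\in(0,1)$ with $\omega_l(i)=O(\chi^i)$ for $l=0,\dots,p$; in particular $\sum_i\omega_l(i)<\infty$.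
   Context: $\mathcal F_k=(\dots,\varepsilon_{k-1},\varepsilon_k)$; $(\varepsilon_k')$ an independent i.i.d. copy; $\mathcal F_k^*=(\dots,\varepsilon_{-1},\varepsilon_0',\varepsilon_1,\dots,\varepsilon_k)$ for $k\ge0$, $e_k^*=G(\mathcal F_k^* )$. By the Markov structure the conditional distribution function of $e_{i+1}$ given $\mathcal F_i$ is $F_1(u\mid e_i)$, and $F_1(u\mid\mathcal F_i^* )$ means $F_1(u\mid e_i^* )$. $\omega_l(i)=\sup_{u\in\mathbb R}\|F_1^{(l)}(u\mid e_i)-F_1^{(l)}(u\mid e_i^* )\|$, $\|V\|=(EV^2)^{1/2}$. *)

theory Defs
  imports "HOL-Probability.Probability" "HOL-Library.Landau_Symbols"
begin

definition lipR :: "(real \<Rightarrow> 'e \<Rightarrow> real) \<Rightarrow> 'e \<Rightarrow> ennreal" where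
  "lipR R z = (SUP xx' \<in> {(x, x'). x \<noteq> x'}.
       ennreal (\<bar>R (fst xx') z - R (snd xx') z\<bar> / \<bar>fst xx' - snd xx'\<bar>))"

text \<open>Positive and negative parts of log for a value in [0,\<infinity>]; log 0 = -\<infinity>.\<close>
definition log_pos :: "ennreal \<Rightarrow> ennreal" where
  "log_pos L = (if L = \<infinity> then \<infinity> else ennreal (max 0 (ln (enn2real L))))"

definition log_neg :: "ennreal \<Rightarrow> ennreal" where
  "log_neg L = (if L = 0 then \<infinity> else if L = \<infinity> then 0
                else ennreal (max 0 (- ln (enn2real L))))"

definition F1 :: "'a measure \<Rightarrow> (real \<Rightarrow> 'e \<Rightarrow> real) \<Rightarrow> ('a \<Rightarrow> 'e) \<Rightarrow> real \<Rightarrow> real \<Rightarrow> real" where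
  "F1 M R X u v = measure M {\<omega> \<in> space M. R v (X \<omega>) \<le> u}"

definition F1l :: "'a measure \<Rightarrow> (real \<Rightarrow> 'e \<Rightarrow> real) \<Rightarrow> ('a \<Rightarrow> 'e) \<Rightarrow> nat \<Rightarrow> real \<Rightarrow> real \<Rightarrow> real" where
  "F1l M R X l u v = ((deriv ^^ l) (\<lambda>u'. F1 M R X u' v)) u"

definition L2norm :: "'a measure \<Rightarrow> ('a \<Rightarrow> real) \<Rightarrow> real" where
  "L2norm M V = sqrt (\<integral>\<omega>. (V \<omega>)\<^sup>2 \<partial>M)"

text \<open>e_i = G(F_i) with F_i = (..., eps_{i-1}, eps_i), G reading the sequence backwards.\<close>
definition eproc :: "((nat \<Rightarrow> 'e) \<Rightarrow> real) \<Rightarrow> (int \<Rightarrow> 'a \<Rightarrow> 'e) \<Rightarrow> int \<Rightarrow> 'a \<Rightarrow> real" where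
  "eproc G eps i \<omega> = G (\<lambda>k. eps (i - int k) \<omega>)"

text \<open>e_i^* = G(F_i^*), eps_0 replaced by eps_0', for i \<ge> 0.\<close>
definition estar :: "((nat \<Rightarrow> 'e) \<Rightarrow> real) \<Rightarrow> (int \<Rightarrow> 'a \<Rightarrow> 'e) \<Rightarrow> ('a \<Rightarrow> 'e) \<Rightarrow> nat \<Rightarrow> 'a \<Rightarrow> real" where
  "estar G eps eps' i \<omega> =
     G (\<lambda>k. if int i - int k = 0 then eps' \<omega> else eps (int i - int k) \<omega>)"

definition omega_l ::
  "'a measure \<Rightarrow> (real \<Rightarrow> 'e \<Rightarrow> real) \<Rightarrow> ((nat \<Rightarrow> 'e) \<Rightarrow> real) \<Rightarrow> (int \<Rightarrow> 'a \<Rightarrow> 'e)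
     \<Rightarrow> ('a \<Rightarrow> 'e) \<Rightarrow> nat \<Rightarrow> nat \<Rightarrow> real" where
  "omega_l M R G eps eps' l i =
     (SUP u. L2norm M (\<lambda>\<omega>. F1l M R (eps 0) l u (eproc G eps (int i) \<omega>)
                            - F1l M R (eps 0) l u (estar G eps eps' i \<omega>)))"

end

theory Submission
  imports Defs
begin

(* The stationary solution e_i = G(F_i) is coupled with e*_i = G(F*_i), which differs from it
   only through the innovation at time 0. Since E log L < 0 for the Lipschitz constant L of
   R(., eps_0) and L is in L^q, a Box-Cox argument gives a small alpha > 0 with
   rho = E L^alpha < 1. For i >= 1 both processes follow x -> R(x, eps_i), so |e_i - e*_i|^alpha
   is at most a product of i independent copies of L^alpha times |e_0 - e*_0|^alpha, and
   E |e_i - e*_i|^alpha <= rho^i E |e_0 - e*_0|^alpha. The last expectation is finite because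
   unrolling the recursion backwards from time 0 gives E |e_0 - t0|^alpha < infinity. Finally
   F_1^(l)(u | .) is bounded by C0 and C0-Lipschitz, so
   (F_1^(l)(u | e_i) - F_1^(l)(u | e*_i))^2 <= 4 C0^2 |e_i - e*_i|^alpha, and omega_l(i) decays
   like rho^(i/2). *)

lemma powr_add_le_add_powr:
  fixes x y \<alpha> :: real
  assumes "0 \<le> x" "0 \<le> y" "0 < \<alpha>" "\<alpha> \<le> 1"
  shows "(x + y) powr \<alpha> \<le> x powr \<alpha> + y powr \<alpha>"
proof (cases "x + y = 0")
  case False
  then have pos: "0 < x + y" using assms by simp
  have frac: "t \<le> t powr \<alpha>" if "0 \<le> t" "t \<le> 1" for t :: real
  proof -
    have "t powr 1 \<le> t powr \<alpha>" by (rule powr_mono') (use that assms in auto)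
    then show ?thesis using that by (cases "t = 0") auto
  qed
  have "1 = x / (x + y) + y / (x + y)" using pos by (simp add: add_divide_distrib[symmetric])
  also have "\<dots> \<le> (x / (x + y)) powr \<alpha> + (y / (x + y)) powr \<alpha>"
    using assms pos by (intro add_mono frac) auto
  also have "\<dots> = (x powr \<alpha> + y powr \<alpha>) / (x + y) powr \<alpha>"
    using assms pos by (simp add: powr_divide add_divide_distrib)
  finally show ?thesis using pos by (simp add: le_divide_eq)
qed (use assms in auto)

lemma powr_le_one_add_powr:
  fixes x \<alpha> \<beta> :: real
  assumes "0 \<le> x" "0 < \<alpha>" "\<alpha> \<le> \<beta>"
  shows "x powr \<alpha> \<le> 1 + x powr \<beta>"
proof (cases "x \<le> 1")
  case True
  then show ?thesis using assms powr_le1[of \<alpha> x] powr_ge_zero[of x \<beta>] by linarith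
next
  case False
  then have "x powr \<alpha> \<le> x powr \<beta>" using assms by (intro powr_mono) auto
  then show ?thesis by simp
qed

lemma min_sq_le_powr:
  fixes x \<alpha> :: real
  assumes "0 \<le> x" "0 < \<alpha>" "\<alpha> \<le> 1"
  shows "(min x 2)\<^sup>2 \<le> 4 * x powr \<alpha>"
proof (cases "2 \<le> x")
  case True
  then have "min x 2 = 2" by simp
  then show ?thesis using True assms ge_one_powr_ge_zero[of x \<alpha>] by simp
next
  case False
  define y where "y = x / 2"
  have y: "0 \<le> y" "y \<le> 1" using assms False by (auto simp: y_def)
  have "y powr 2 \<le> y powr \<alpha>" using y assms by (intro powr_mono') auto
  then have "y\<^sup>2 \<le> y powr \<alpha>" using y by (cases "y = 0") (simp_all add: powr_numeral)
  also have "\<dots> \<le> x powr \<alpha>" using y assms by (intro powr_mono2) (auto simp: y_def)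
  finally show ?thesis using False by (simp add: y_def min_def power2_eq_square)
qed

lemma affine_recurrence_le:
  fixes y l c :: "nat \<Rightarrow> real"
  assumes step: "\<And>j. y j \<le> l j * y (Suc j) + c j" and l: "\<And>j. 0 \<le> l j"
  shows "y 0 \<le> (\<Prod>j<m. l j) * y m + (\<Sum>j<m. (\<Prod>i<j. l i) * c j)"
proof (induction m)
  case (Suc m)
  have "(\<Prod>j<m. l j) * y m \<le> (\<Prod>j<m. l j) * (l m * y (Suc m) + c m)"
    using step l by (intro mult_left_mono prod_nonneg) auto
  then show ?case using Suc.IH by (simp add: algebra_simps)
qed simp

lemma prod_recurrence_le:
  fixes d l :: "nat \<Rightarrow> real"
  assumes step: "\<And>k. d (Suc k) \<le> l k * d k" and l: "\<And>k. 0 \<le> l k"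
  shows "d i \<le> (\<Prod>k<i. l k) * d 0"
proof (induction i)
  case (Suc i)
  have "d (Suc i) \<le> l i * ((\<Prod>k<i. l k) * d 0)"
    using step[of i] mult_left_mono[OF Suc.IH l[of i]] by linarith
  then show ?case by (simp add: ac_simps)
qed simp

section \<open>Fractional moments of a variable with negative log-moment\<close>

lemma log_pos_mono:
  assumes "x \<le> y"
  shows "log_pos x \<le> log_pos y"
proof (cases "y = \<infinity>")
  case False
  then have "y < \<infinity>" by (simp add: less_top)
  then have "enn2real x \<le> enn2real y" "x \<noteq> \<infinity>"
    using assms enn2real_mono by (auto simp: top_unique)
  moreover have "ln (enn2real x) \<le> ln (enn2real y)" if "enn2real x \<noteq> 0"
  proof -
    have "0 < enn2real x" using that enn2real_nonneg[of x] by linarith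
    then show ?thesis using calculation(1) by simp
  qed
  ultimately show ?thesis using False
    by (cases "enn2real x = 0") (auto simp: log_pos_def intro!: ennreal_leI max.mono)
qed (simp add: log_pos_def)

lemma log_neg_antimono:
  assumes "x \<le> y"
  shows "log_neg y \<le> log_neg x"
proof (cases "x = 0 \<or> y = \<infinity>")
  case False
  then have "y < \<infinity>" "0 < x" by (simp_all add: less_top zero_less_iff_neq_zero)
  then have "enn2real x \<le> enn2real y" "0 < enn2real x" "x \<noteq> \<infinity>" "y \<noteq> 0"
    using assms enn2real_mono by (auto simp: top_unique enn2real_positive_iff)
  then show ?thesis using False by (auto simp: log_neg_def intro!: ennreal_leI)
qed (auto simp: log_neg_def)

definition box_cox :: "real \<Rightarrow> real \<Rightarrow> real" where
  "box_cox \<alpha> x = (x powr \<alpha> - 1) / \<alpha>"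

lemma box_cox_mono:
  assumes x: "0 \<le> x" and \<alpha>: "0 < \<alpha>" "\<alpha> \<le> \<beta>"
  shows "box_cox \<alpha> x \<le> box_cox \<beta> x"
proof (cases "x = 0")
  case True
  have "1 / \<beta> \<le> 1 / \<alpha>" using \<alpha> by (intro divide_left_mono) auto
  then show ?thesis using True \<alpha> by (simp add: box_cox_def)
next
  case False
  define t where "t = \<alpha> / \<beta>"
  have t: "0 \<le> t" "t \<le> 1" using \<alpha> by (auto simp: t_def)
  have "exp (t * (\<beta> * ln x)) \<le> (1 - t) + t * exp (\<beta> * ln x)"
    using convex_onD[OF exp_convex, of t 0 "\<beta> * ln x"] t by simp
  moreover have "t * (\<beta> * ln x) = \<alpha> * ln x"
    using \<alpha> by (simp add: t_def)
  ultimately have "exp (\<alpha> * ln x) \<le> (1 - t) + t * exp (\<beta> * ln x)"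
    by simp
  then have "x powr \<alpha> \<le> (1 - t) + t * x powr \<beta>"
    using False x by (simp add: powr_def)
  then have "(x powr \<alpha> - 1) / \<alpha> \<le> t * (x powr \<beta> - 1) / \<alpha>"
    using \<alpha> by (intro divide_right_mono) (auto simp: algebra_simps)
  also have "\<dots> = (x powr \<beta> - 1) / \<beta>"
    using \<alpha> by (simp add: t_def)
  finally show ?thesis by (simp add: box_cox_def)
qed

lemma ln_le_box_cox:
  assumes "0 < x" "0 < \<alpha>"
  shows "ln x \<le> box_cox \<alpha> x"
proof -
  have "1 + \<alpha> * ln x \<le> x powr \<alpha>"
    using exp_ge_add_one_self[of "\<alpha> * ln x"] assms by (simp add: powr_def)
  then show ?thesis using assms by (simp add: box_cox_def pos_le_divide_eq mult.commute)
qed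

lemma box_cox_le_ln_mult_powr:
  assumes "0 < x" "0 < \<alpha>"
  shows "box_cox \<alpha> x \<le> ln x * x powr \<alpha>"
proof -
  define t where "t = \<alpha> * ln x"
  have "(1 - t) * exp t \<le> exp (- t) * exp t"
    using exp_ge_add_one_self[of "- t"] by (intro mult_right_mono) auto
  then have "exp t - 1 \<le> t * exp t" by (simp add: algebra_simps flip: exp_add)
  then have "x powr \<alpha> - 1 \<le> \<alpha> * (ln x * x powr \<alpha>)"
    using assms by (simp add: powr_def t_def)
  then show ?thesis using assms by (simp add: box_cox_def divide_le_eq mult.commute)
qed

lemma box_cox_tendsto_ln:
  assumes x: "0 < x" and A: "\<And>n. 0 < A n" "A \<longlonglongrightarrow> 0"
  shows "(\<lambda>n. box_cox (A n) x) \<longlonglongrightarrow> ln x"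
proof (rule tendsto_sandwich)
  show "\<forall>\<^sub>F n in sequentially. ln x \<le> box_cox (A n) x"
    using ln_le_box_cox[OF x A(1)] by simp
  show "\<forall>\<^sub>F n in sequentially. box_cox (A n) x \<le> ln x * x powr A n"
    using box_cox_le_ln_mult_powr[OF x A(1)] by simp
  have "(\<lambda>n. ln x * x powr A n) \<longlonglongrightarrow> ln x * x powr 0"
    using x A(2) by (intro tendsto_intros) auto
  then show "(\<lambda>n. ln x * x powr A n) \<longlonglongrightarrow> ln x" using x by simp
qed simp

lemma log_pos_eq_INF_box_cox:
  assumes x: "0 \<le> x" and \<beta>: "0 < \<beta>"
  shows "log_pos (ennreal x) = (INF n. ennreal (box_cox (\<beta> / Suc n) x))"
proof (cases "x = 0")
  case True
  then have "ennreal (box_cox (\<beta> / Suc n) x) = 0" for n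
    using \<beta> by (intro ennreal_neg) (simp add: box_cox_def divide_nonpos_pos)
  then show ?thesis using True by (simp add: log_pos_def)
next
  case False
  then have x: "0 < x" using x by simp
  have "decseq (\<lambda>n. ennreal (box_cox (\<beta> / Suc n) x))"
    using \<beta> x by (intro decseq_SucI ennreal_leI box_cox_mono) (auto simp: frac_le)
  then have "(\<lambda>n. ennreal (box_cox (\<beta> / Suc n) x)) \<longlonglongrightarrow> (INF n. ennreal (box_cox (\<beta> / Suc n) x))"
    by (rule LIMSEQ_INF)
  moreover have "(\<lambda>n. ennreal (box_cox (\<beta> / Suc n) x)) \<longlonglongrightarrow> ennreal (ln x)"
    using \<beta> x lim_const_over_n[of \<beta>]
    by (intro tendsto_ennrealI box_cox_tendsto_ln LIMSEQ_Suc) auto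
  ultimately show ?thesis
    using x LIMSEQ_unique by (fastforce simp: log_pos_def)
qed

lemma log_neg_eq_SUP_box_cox:
  assumes x: "0 \<le> x" and \<beta>: "0 < \<beta>"
  shows "log_neg (ennreal x) = (SUP n. ennreal (- box_cox (\<beta> / Suc n) x))"
proof (cases "x = 0")
  case True
  have "(SUP n. ennreal (- box_cox (\<beta> / Suc n) x)) = top"
  proof (rule ennreal_SUP_eq_top)
    fix m :: nat
    obtain n :: nat where "real m * \<beta> < real n" using reals_Archimedean2 by blast
    then have "real m \<le> real (Suc n) / \<beta>" using \<beta> by (simp add: le_divide_eq)
    moreover have "- box_cox (\<beta> / Suc n) x = real (Suc n) / \<beta>"
      using True \<beta> by (simp add: box_cox_def field_simps)
    ultimately show "\<exists>n\<in>UNIV. of_nat m \<le> ennreal (- box_cox (\<beta> / Suc n) x)"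
      by (metis UNIV_I ennreal_leI ennreal_of_nat_eq_real_of_nat)
  qed
  moreover have "log_neg (ennreal x) = top" using True by (simp add: log_neg_def)
  ultimately show ?thesis by (simp only:)
next
  case False
  then have x: "0 < x" using x by simp
  have "incseq (\<lambda>n. ennreal (- box_cox (\<beta> / Suc n) x))"
    using \<beta> x by (intro incseq_SucI ennreal_leI) (auto simp: frac_le intro: box_cox_mono)
  then have "(\<lambda>n. ennreal (- box_cox (\<beta> / Suc n) x)) \<longlonglongrightarrow> (SUP n. ennreal (- box_cox (\<beta> / Suc n) x))"
    by (rule LIMSEQ_SUP)
  moreover have "(\<lambda>n. ennreal (- box_cox (\<beta> / Suc n) x)) \<longlonglongrightarrow> ennreal (- ln x)"
    using \<beta> x lim_const_over_n[of \<beta>]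
    by (intro tendsto_ennrealI tendsto_minus box_cox_tendsto_ln LIMSEQ_Suc) auto
  ultimately show ?thesis
    using x LIMSEQ_unique by (fastforce simp: log_neg_def)
qed

lemma nn_integral_neg_part_le_pos_part:
  fixes g :: "'a \<Rightarrow> real"
  assumes g: "integrable M g" and "0 \<le> (\<integral>\<omega>. g \<omega> \<partial>M)"
  shows "(\<integral>\<^sup>+\<omega>. ennreal (- g \<omega>) \<partial>M) \<le> (\<integral>\<^sup>+\<omega>. ennreal (g \<omega>) \<partial>M)"
proof -
  have pos: "integrable M (\<lambda>\<omega>. max 0 (g \<omega>))" and neg: "integrable M (\<lambda>\<omega>. max 0 (- g \<omega>))"
    using g by auto
  have "(\<integral>\<omega>. g \<omega> \<partial>M) = (\<integral>\<omega>. max 0 (g \<omega>) - max 0 (- g \<omega>) \<partial>M)"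
    by (intro Bochner_Integration.integral_cong) auto
  also have "\<dots> = (\<integral>\<omega>. max 0 (g \<omega>) \<partial>M) - (\<integral>\<omega>. max 0 (- g \<omega>) \<partial>M)"
    using pos neg by (rule Bochner_Integration.integral_diff)
  finally have "(\<integral>\<omega>. max 0 (- g \<omega>) \<partial>M) \<le> (\<integral>\<omega>. max 0 (g \<omega>) \<partial>M)"
    using assms(2) by simp
  then show ?thesis
    using nn_integral_eq_integral[OF pos] nn_integral_eq_integral[OF neg]
    by (simp add: ennreal_leI)
qed

text \<open>box_cox (\<beta> / Suc n) decreases to ln as n grows, so monotone convergence applies to the
  positive parts from above and to the negative parts from below.\<close>
lemma nn_integral_log_neg_le_log_pos:
  fixes a :: "'a \<Rightarrow> real"
  assumes [measurable]: "a \<in> borel_measurable M" and a: "\<And>\<omega>. 0 \<le> a \<omega>" and \<beta>: "0 < \<beta>"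
    and int: "\<And>n. integrable M (\<lambda>\<omega>. box_cox (\<beta> / Suc n) (a \<omega>))"
    and mean: "\<And>n. 0 \<le> (\<integral>\<omega>. box_cox (\<beta> / Suc n) (a \<omega>) \<partial>M)"
  shows "(\<integral>\<^sup>+\<omega>. log_neg (ennreal (a \<omega>)) \<partial>M) \<le> (\<integral>\<^sup>+\<omega>. log_pos (ennreal (a \<omega>)) \<partial>M)"
proof -
  define g where "g n \<omega> = box_cox (\<beta> / Suc n) (a \<omega>)" for n \<omega>
  have [measurable]: "g n \<in> borel_measurable M" for n
    unfolding g_def box_cox_def by measurable
  have neg_le_pos: "(\<integral>\<^sup>+\<omega>. ennreal (- g n \<omega>) \<partial>M) \<le> (\<integral>\<^sup>+\<omega>. ennreal (g n \<omega>) \<partial>M)" for n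
    using int mean unfolding g_def by (rule nn_integral_neg_part_le_pos_part)
  have g_mono: "g n \<omega> \<le> g m \<omega>" if "m \<le> n" for m n \<omega>
    unfolding g_def using a \<beta> that by (intro box_cox_mono) (auto simp: frac_le)
  have "(\<integral>\<^sup>+\<omega>. log_neg (ennreal (a \<omega>)) \<partial>M) = (\<integral>\<^sup>+\<omega>. (SUP n. ennreal (- g n \<omega>)) \<partial>M)"
    using a \<beta> by (simp add: log_neg_eq_SUP_box_cox g_def)
  also have "\<dots> = (SUP n. \<integral>\<^sup>+\<omega>. ennreal (- g n \<omega>) \<partial>M)"
    using g_mono by (intro nn_integral_monotone_convergence_SUP incseq_SucI le_funI ennreal_leI) auto
  also have "\<dots> \<le> (INF n. \<integral>\<^sup>+\<omega>. ennreal (g n \<omega>) \<partial>M)"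
  proof (intro SUP_least INF_greatest)
    fix m n
    have "(\<integral>\<^sup>+\<omega>. ennreal (- g m \<omega>) \<partial>M) \<le> (\<integral>\<^sup>+\<omega>. ennreal (- g (max m n) \<omega>) \<partial>M)"
      using g_mono by (intro nn_integral_mono ennreal_leI) auto
    also have "\<dots> \<le> (\<integral>\<^sup>+\<omega>. ennreal (g (max m n) \<omega>) \<partial>M)" by (rule neg_le_pos)
    also have "\<dots> \<le> (\<integral>\<^sup>+\<omega>. ennreal (g n \<omega>) \<partial>M)"
      using g_mono by (intro nn_integral_mono ennreal_leI) auto
    finally show "(\<integral>\<^sup>+\<omega>. ennreal (- g m \<omega>) \<partial>M) \<le> (\<integral>\<^sup>+\<omega>. ennreal (g n \<omega>) \<partial>M)" .
  qed
  also have "\<dots> = (\<integral>\<^sup>+\<omega>. (INF n. ennreal (g n \<omega>)) \<partial>M)"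
  proof (rule nn_integral_monotone_convergence_INF_decseq[symmetric])
    show "decseq (\<lambda>n \<omega>. ennreal (g n \<omega>))"
      using g_mono by (intro decseq_SucI le_funI ennreal_leI) auto
    have "(\<integral>\<^sup>+\<omega>. ennreal (g 0 \<omega>) \<partial>M) \<le> (\<integral>\<^sup>+\<omega>. ennreal (norm (g 0 \<omega>)) \<partial>M)"
      by (intro nn_integral_mono ennreal_leI) simp
    also have "\<dots> < \<infinity>" using int[of 0] by (simp add: g_def integrable_iff_bounded)
    finally show "(\<integral>\<^sup>+\<omega>. ennreal (g 0 \<omega>) \<partial>M) < \<infinity>" .
  qed auto
  also have "\<dots> = (\<integral>\<^sup>+\<omega>. log_pos (ennreal (a \<omega>)) \<partial>M)"
    using a \<beta> by (simp add: log_pos_eq_INF_box_cox g_def)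
  finally show ?thesis .
qed

lemma (in prob_space) exists_powr_integral_less_one:
  fixes a :: "'a \<Rightarrow> real"
  assumes [measurable]: "a \<in> borel_measurable M" and a: "\<And>\<omega>. 0 \<le> a \<omega>" and \<beta>: "0 < \<beta>"
    and integrable: "integrable M (\<lambda>\<omega>. a \<omega> powr \<beta>)"
    and log: "(\<integral>\<^sup>+\<omega>. log_pos (ennreal (a \<omega>)) \<partial>M) < (\<integral>\<^sup>+\<omega>. log_neg (ennreal (a \<omega>)) \<partial>M)"
  shows "\<exists>\<alpha>. 0 < \<alpha> \<and> \<alpha> \<le> \<beta> \<and> (\<integral>\<omega>. a \<omega> powr \<alpha> \<partial>M) < 1"
proof (rule ccontr)
  assume contra: "\<not> ?thesis"
  have A: "0 < \<beta> / Suc n" "\<beta> / Suc n \<le> \<beta>" for n :: nat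
    using \<beta> by (auto simp: divide_le_eq)
  have int_powr: "integrable M (\<lambda>\<omega>. a \<omega> powr (\<beta> / Suc n))" for n
  proof (rule Bochner_Integration.integrable_bound)
    show "integrable M (\<lambda>\<omega>. 1 + a \<omega> powr \<beta>)" using integrable by simp
    show "AE \<omega> in M. norm (a \<omega> powr (\<beta> / Suc n)) \<le> norm (1 + a \<omega> powr \<beta>)"
      using powr_le_one_add_powr[OF a A] by (intro AE_I2) simp
  qed measurable
  then have int: "integrable M (\<lambda>\<omega>. box_cox (\<beta> / Suc n) (a \<omega>))" for n
    unfolding box_cox_def by auto
  have "0 \<le> (\<integral>\<omega>. box_cox (\<beta> / Suc n) (a \<omega>) \<partial>M)" for n
  proof -
    have "1 \<le> (\<integral>\<omega>. a \<omega> powr (\<beta> / Suc n) \<partial>M)" using contra A by (meson not_le)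
    then show ?thesis
      using int_powr[of n] A[of n] by (simp add: box_cox_def prob_space)
  qed
  with nn_integral_log_neg_le_log_pos[OF _ a \<beta> int] log show False by simp
qed

section \<open>A measurable Lipschitz constant\<close>

text \<open>lipR R z need not be measurable in z. The supremum over rational pairs is, and it is still a
  Lipschitz constant of R(., z) whenever lipR R z is finite.\<close>
definition rat_lip :: "(real \<Rightarrow> 'e \<Rightarrow> real) \<Rightarrow> 'e \<Rightarrow> real" where
  "rat_lip R z = enn2real (SUP (x, x') \<in> {(x, x'). x \<in> \<rat> \<and> x' \<in> \<rat> \<and> x \<noteq> x'}.
       ennreal (\<bar>R x z - R x' z\<bar> / \<bar>x - x'\<bar>))"

lemma rat_lip_nonneg: "0 \<le> rat_lip R z"
  by (simp add: rat_lip_def)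

lemma borel_measurable_rat_lip [measurable]:
  assumes [measurable]: "(\<lambda>(x, z). R x z) \<in> borel_measurable (borel \<Otimes>\<^sub>M N)"
  shows "rat_lip R \<in> borel_measurable N"
proof -
  have "countable {(x, x'). x \<in> \<rat> \<and> x' \<in> \<rat> \<and> x \<noteq> (x' :: real)}"
    by (rule countable_subset[OF _ countable_SIGMA[OF countable_rat countable_rat]]) auto
  moreover have "(\<lambda>z. R x z) \<in> borel_measurable N" for x
    using measurable_Pair2[OF assms, of x] by simp
  ultimately show ?thesis
    unfolding rat_lip_def by (intro borel_measurable_enn2real borel_measurable_SUP) auto
qed

lemma lipschitz_lipR:
  assumes "lipR R z < \<infinity>"
  shows "(enn2real (lipR R z))-lipschitz_on UNIV (\<lambda>x. R x z)"
proof (rule lipschitz_onI)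
  fix a b :: real
  show "dist (R a z) (R b z) \<le> enn2real (lipR R z) * dist a b"
  proof (cases "a = b")
    case False
    have "ennreal (\<bar>R a z - R b z\<bar> / \<bar>a - b\<bar>) \<le> lipR R z"
      unfolding lipR_def using False by (intro SUP_upper2[of "(a, b)"]) auto
    then have "\<bar>R a z - R b z\<bar> / \<bar>a - b\<bar> \<le> enn2real (lipR R z)"
      using assms enn2real_mono[of "ennreal (\<bar>R a z - R b z\<bar> / \<bar>a - b\<bar>)" "lipR R z"] by simp
    then show ?thesis using False by (simp add: dist_real_def field_simps)
  qed simp
qed simp

lemma rat_SUP_le_lipR:
  "(SUP (x, x') \<in> {(x, x'). x \<in> \<rat> \<and> x' \<in> \<rat> \<and> x \<noteq> x'}. ennreal (\<bar>R x z - R x' z\<bar> / \<bar>x - x'\<bar>))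
     \<le> lipR R z"
  unfolding lipR_def by (rule SUP_subset_mono) auto

lemma rat_lip_le_lipR:
  assumes "lipR R z < \<infinity>"
  shows "rat_lip R z \<le> enn2real (lipR R z)"
  unfolding rat_lip_def using assms rat_SUP_le_lipR by (intro enn2real_mono) auto

lemma lipschitz_rat_lip:
  assumes fin: "lipR R z < \<infinity>"
  shows "(rat_lip R z)-lipschitz_on UNIV (\<lambda>x. R x z)"
proof -
  define f where "f a b = \<bar>R a z - R b z\<bar> - rat_lip R z * \<bar>a - b\<bar>" for a b
  have rat: "f a b \<le> 0" if "a \<in> \<rat>" "b \<in> \<rat>" for a b
  proof (cases "a = b")
    case False
    have "ennreal (\<bar>R a z - R b z\<bar> / \<bar>a - b\<bar>)
        \<le> (SUP (x, x') \<in> {(x, x'). x \<in> \<rat> \<and> x' \<in> \<rat> \<and> x \<noteq> x'}. ennreal (\<bar>R x z - R x' z\<bar> / \<bar>x - x'\<bar>))"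
      using False that by (intro SUP_upper2[of "(a, b)"]) auto
    moreover have "\<dots> < \<infinity>" using rat_SUP_le_lipR fin by (rule order.strict_trans1)
    ultimately have "\<bar>R a z - R b z\<bar> / \<bar>a - b\<bar> \<le> rat_lip R z"
      unfolding rat_lip_def using enn2real_mono by fastforce
    then show ?thesis using False by (simp add: f_def field_simps)
  qed (simp add: f_def)
  have cont: "continuous_on UNIV (\<lambda>x. R x z)"
    using lipschitz_on_continuous_on[OF lipschitz_lipR[OF fin]] .
  have "continuous_on UNIV (\<lambda>a. f a b)" "continuous_on UNIV (f a)" for a b
    unfolding f_def by (intro continuous_intros continuous_on_compose2[OF cont]; simp)+
  moreover have closure: "g x \<le> 0" if "continuous_on UNIV g" "\<And>x. x \<in> \<rat> \<Longrightarrow> g x \<le> 0"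
    for g :: "real \<Rightarrow> real" and x
    using continuous_le_on_closure[of \<rat> g x 0] that by (simp add: Rats_closure_real)
  ultimately have "f a b \<le> 0" for a b
    using rat by (metis closure)
  then show ?thesis
    by (intro lipschitz_onI rat_lip_nonneg) (simp add: f_def dist_real_def)
qed

lemma ennreal_power_tendsto_zero:
  fixes \<rho> :: ennreal
  assumes "\<rho> < 1"
  shows "(\<lambda>m. \<rho> ^ m) \<longlonglongrightarrow> 0"
proof -
  obtain r where r: "\<rho> = ennreal r" "0 \<le> r" "r < 1"
    using assms by (cases \<rho> rule: ennreal_cases) auto
  have "(\<lambda>m. ennreal (r ^ m)) \<longlonglongrightarrow> ennreal 0"
    using r by (intro tendsto_ennrealI LIMSEQ_power_zero) auto
  then show ?thesis using r by (simp add: ennreal_power)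
qed

lemma suminf_power_ennreal_less_top:
  fixes \<rho> :: ennreal
  assumes "\<rho> < 1"
  shows "(\<Sum>j. \<rho> ^ j) < \<infinity>"
proof -
  obtain r where r: "\<rho> = ennreal r" "0 \<le> r" "r < 1"
    using assms by (cases \<rho> rule: ennreal_cases) auto
  then have "(\<lambda>j. ennreal (r ^ j)) sums ennreal (1 / (1 - r))"
    using geometric_sums[of r] by simp
  then have "(\<Sum>j. ennreal (r ^ j)) = ennreal (1 / (1 - r))"
    by (rule sums_unique[symmetric])
  then show ?thesis using r by (simp add: ennreal_power)
qed

lemma (in prob_space) AE_indep_var_pred:
  assumes indep: "indep_var MY Y MZ Z"
    and pred: "{x \<in> space (MY \<Otimes>\<^sub>M MZ). P (fst x) (snd x)} \<in> sets (MY \<Otimes>\<^sub>M MZ)"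
    and fibre: "\<And>y. y \<in> space MY \<Longrightarrow> AE z in distr M MZ Z. P y z"
  shows "AE \<omega> in M. P (Y \<omega>) (Z \<omega>)"
proof -
  have [measurable]: "Y \<in> measurable M MY" "Z \<in> measurable M MZ"
    using indep_var_rv1[OF indep] indep_var_rv2[OF indep] .
  interpret pair_sigma_finite "distr M MY Y" "distr M MZ Z"
    by (intro pair_sigma_finite.intro prob_space_imp_sigma_finite prob_space_distr) auto
  have sets_eq: "sets (distr M MY Y \<Otimes>\<^sub>M distr M MZ Z) = sets (MY \<Otimes>\<^sub>M MZ)"
    by (intro sets_pair_measure_cong) auto
  have "AE x in distr M MY Y \<Otimes>\<^sub>M distr M MZ Z. P (fst x) (snd x)"
  proof (rule AE_pair_measure)
    show "{x \<in> space (distr M MY Y \<Otimes>\<^sub>M distr M MZ Z). P (fst x) (snd x)}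
        \<in> sets (distr M MY Y \<Otimes>\<^sub>M distr M MZ Z)"
      using pred unfolding sets_eq sets_eq_imp_space_eq[OF sets_eq] .
  qed (use fibre in auto)
  moreover have "distr M MY Y \<Otimes>\<^sub>M distr M MZ Z = distr M (MY \<Otimes>\<^sub>M MZ) (\<lambda>\<omega>. (Y \<omega>, Z \<omega>))"
    using indep by (simp add: indep_var_distribution_eq)
  ultimately have "AE x in distr M (MY \<Otimes>\<^sub>M MZ) (\<lambda>\<omega>. (Y \<omega>, Z \<omega>)). P (fst x) (snd x)"
    by (simp only:)
  then show ?thesis
    using pred by (subst (asm) AE_distr_iff) auto
qed

lemma nn_integral_min_le_of_domination:
  fixes Y Y' P S :: "'a \<Rightarrow> real"
  assumes [measurable]: "Y \<in> borel_measurable M" "Y' \<in> borel_measurable M"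
      "P \<in> borel_measurable M" "S \<in> borel_measurable M"
    and nonneg: "\<And>\<omega>. 0 \<le> P \<omega>" "\<And>\<omega>. 0 \<le> S \<omega>" and T: "0 \<le> T" and K: "0 \<le> K"
    and dom: "AE \<omega> in M. Y \<omega> \<le> P \<omega> * Y' \<omega> + S \<omega>"
  shows "(\<integral>\<^sup>+\<omega>. ennreal (min (Y \<omega>) K) \<partial>M) \<le> ennreal T * (\<integral>\<^sup>+\<omega>. P \<omega> \<partial>M)
           + ennreal K * emeasure M {\<omega>\<in>space M. T < Y' \<omega>} + (\<integral>\<^sup>+\<omega>. S \<omega> \<partial>M)"
proof -
  let ?B = "{\<omega>\<in>space M. T < Y' \<omega>}"
  have "(\<integral>\<^sup>+\<omega>. ennreal (min (Y \<omega>) K) \<partial>M)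
      \<le> (\<integral>\<^sup>+\<omega>. ennreal T * ennreal (P \<omega>) + ennreal K * indicator ?B \<omega> + ennreal (S \<omega>) \<partial>M)"
  proof (rule nn_integral_mono_AE)
    show "AE \<omega> in M. ennreal (min (Y \<omega>) K)
        \<le> ennreal T * ennreal (P \<omega>) + ennreal K * indicator ?B \<omega> + ennreal (S \<omega>)"
      using dom AE_space
    proof eventually_elim
      case (elim \<omega>)
      have "min (Y \<omega>) K \<le> T * P \<omega> + K * indicator ?B \<omega> + S \<omega>"
      proof (cases "\<omega> \<in> ?B")
        case False
        then have "P \<omega> * Y' \<omega> \<le> P \<omega> * T"
          using elim nonneg by (intro mult_left_mono) auto
        then show ?thesis using elim False by (simp add: mult.commute)
      next
        case True
        have "0 \<le> T * P \<omega>" "0 \<le> S \<omega>" using T nonneg by simp_all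
        then show ?thesis using True by simp
      qed
      then have "ennreal (min (Y \<omega>) K) \<le> ennreal (T * P \<omega> + K * indicator ?B \<omega> + S \<omega>)"
        by (rule ennreal_leI)
      also have "\<dots> = ennreal T * ennreal (P \<omega>) + ennreal K * indicator ?B \<omega> + ennreal (S \<omega>)"
        using T K nonneg by (simp add: ennreal_mult indicator_def)
      finally show ?case .
    qed
  qed
  also have "\<dots> = ennreal T * (\<integral>\<^sup>+\<omega>. P \<omega> \<partial>M) + ennreal K * emeasure M ?B + (\<integral>\<^sup>+\<omega>. S \<omega> \<partial>M)"
    by (simp add: nn_integral_add nn_integral_cmult nn_integral_cmult_indicator)
  finally show ?thesis .
qed

lemma nn_integral_eq_SUP_min:
  fixes f :: "'a \<Rightarrow> real"
  assumes [measurable]: "f \<in> borel_measurable M"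
  shows "(\<integral>\<^sup>+\<omega>. ennreal (f \<omega>) \<partial>M) = (SUP K. \<integral>\<^sup>+\<omega>. ennreal (min (f \<omega>) (real K)) \<partial>M)"
proof -
  have "ennreal (f \<omega>) = (SUP K. ennreal (min (f \<omega>) (real K)))" for \<omega>
  proof (rule antisym)
    obtain K :: nat where "f \<omega> \<le> real K" using real_arch_simple by blast
    then show "ennreal (f \<omega>) \<le> (SUP K. ennreal (min (f \<omega>) (real K)))"
      by (intro SUP_upper2[of K]) auto
  qed (intro SUP_least ennreal_leI; simp)
  then show ?thesis
    by (simp add: nn_integral_monotone_convergence_SUP incseq_def le_fun_def ennreal_leI)
qed

text \<open>No integrability of Y 0 is assumed: the bound is proved for min (Y 0) K, first letting m and
  then the threshold for Y m tend to infinity; the tail of Y m does not depend on m.\<close>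
lemma (in prob_space) nn_integral_le_of_iterated_domination:
  fixes Y P S :: "nat \<Rightarrow> 'a \<Rightarrow> real" and C :: ennreal
  assumes [measurable]: "\<And>m. Y m \<in> borel_measurable M" "\<And>m. P m \<in> borel_measurable M"
      "\<And>m. S m \<in> borel_measurable M"
    and nonneg: "\<And>m \<omega>. 0 \<le> P m \<omega>" "\<And>m \<omega>. 0 \<le> S m \<omega>"
    and same_law: "\<And>m. distr M borel (Y m) = distr M borel (Y 0)"
    and dom: "\<And>m. AE \<omega> in M. Y 0 \<omega> \<le> P m \<omega> * Y m \<omega> + S m \<omega>"
    and P_lim: "(\<lambda>m. \<integral>\<^sup>+\<omega>. P m \<omega> \<partial>M) \<longlonglongrightarrow> 0"
    and S_bound: "\<And>m. (\<integral>\<^sup>+\<omega>. S m \<omega> \<partial>M) \<le> C"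
  shows "(\<integral>\<^sup>+\<omega>. ennreal (Y 0 \<omega>) \<partial>M) \<le> C"
proof -
  define tail where "tail T = emeasure M {\<omega>\<in>space M. T < Y 0 \<omega>}" for T
  have same_tail: "emeasure M {\<omega>\<in>space M. T < Y m \<omega>} = tail T" for T m
  proof -
    have "emeasure M {\<omega>\<in>space M. T < Y k \<omega>} = emeasure (distr M borel (Y k)) {x. T < x}" for k
      by (subst emeasure_distr) (auto intro!: arg_cong2[where f = emeasure])
    then show ?thesis unfolding tail_def using same_law by metis
  qed
  have bound_T: "(\<integral>\<^sup>+\<omega>. ennreal (min (Y 0 \<omega>) K) \<partial>M) \<le> ennreal K * tail T + C"
    if "0 \<le> T" "0 \<le> K" for T K
  proof -
    have "(\<lambda>m. ennreal T * (\<integral>\<^sup>+\<omega>. P m \<omega> \<partial>M) + (ennreal K * tail T + C))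
        \<longlonglongrightarrow> ennreal T * 0 + (ennreal K * tail T + C)"
      by (intro tendsto_add ennreal_tendsto_cmult P_lim tendsto_const) simp
    moreover have "(\<integral>\<^sup>+\<omega>. ennreal (min (Y 0 \<omega>) K) \<partial>M)
        \<le> ennreal T * (\<integral>\<^sup>+\<omega>. P m \<omega> \<partial>M) + (ennreal K * tail T + C)" for m
    proof -
      have "(\<integral>\<^sup>+\<omega>. ennreal (min (Y 0 \<omega>) K) \<partial>M) \<le> ennreal T * (\<integral>\<^sup>+\<omega>. P m \<omega> \<partial>M)
          + ennreal K * emeasure M {\<omega>\<in>space M. T < Y m \<omega>} + (\<integral>\<^sup>+\<omega>. S m \<omega> \<partial>M)"
        by (rule nn_integral_min_le_of_domination[OF _ _ _ _ nonneg that dom[of m]]) measurable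
      also have "\<dots> \<le> ennreal T * (\<integral>\<^sup>+\<omega>. P m \<omega> \<partial>M) + (ennreal K * tail T + C)"
        unfolding same_tail add.assoc by (intro add_left_mono S_bound)
      finally show ?thesis .
    qed
    ultimately show ?thesis by (intro LIMSEQ_le_const) auto
  qed
  have tail_lim: "(\<lambda>n. tail (real n)) \<longlonglongrightarrow> 0"
  proof -
    have "(\<lambda>n. tail (real n)) \<longlonglongrightarrow> emeasure M (\<Inter>n. {\<omega>\<in>space M. real n < Y 0 \<omega>})"
      unfolding tail_def by (intro Lim_emeasure_decseq decseq_SucI) auto
    moreover have "(\<Inter>n. {\<omega>\<in>space M. real n < Y 0 \<omega>}) = {}"
      by auto (meson not_le real_arch_simple)
    ultimately show ?thesis by simp
  qed
  have "(\<integral>\<^sup>+\<omega>. ennreal (min (Y 0 \<omega>) (real K)) \<partial>M) \<le> C" for K :: nat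
  proof -
    have "(\<lambda>n. ennreal (real K) * tail (real n) + C) \<longlonglongrightarrow> ennreal (real K) * 0 + C"
      by (intro tendsto_add ennreal_tendsto_cmult tail_lim tendsto_const) simp
    then show ?thesis by (intro LIMSEQ_le_const) (use bound_T in auto)
  qed
  then show ?thesis by (subst nn_integral_eq_SUP_min) (auto intro: SUP_least)
qed

section \<open>From moment bounds to the dependence measure\<close>

lemma bounded_lipschitz_diff_sq_le_powr:
  fixes f :: "real \<Rightarrow> real"
  assumes lip: "C-lipschitz_on UNIV f" and bound: "\<And>x. \<bar>f x\<bar> \<le> C"
    and "0 < \<alpha>" "\<alpha> \<le> 1"
  shows "(f a - f b)\<^sup>2 \<le> 4 * C\<^sup>2 * \<bar>a - b\<bar> powr \<alpha>"
proof -
  have "\<bar>f a - f b\<bar> \<le> C * \<bar>a - b\<bar>"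
    using lipschitz_on_normD[OF lip] by simp
  moreover have "\<bar>f a - f b\<bar> \<le> C * 2" using bound[of a] bound[of b] by linarith
  ultimately have "\<bar>f a - f b\<bar> \<le> C * min \<bar>a - b\<bar> 2" by (simp add: min_def)
  then have "(f a - f b)\<^sup>2 \<le> C\<^sup>2 * (min \<bar>a - b\<bar> 2)\<^sup>2"
    by (metis abs_ge_zero power2_abs power_mono power_mult_distrib)
  also have "\<dots> \<le> C\<^sup>2 * (4 * \<bar>a - b\<bar> powr \<alpha>)"
    using assms by (intro mult_left_mono min_sq_le_powr) auto
  finally show ?thesis by simp
qed

lemma L2norm_nonneg: "0 \<le> L2norm M V"
  by (simp add: L2norm_def)

lemma L2norm_comp_diff_le:
  fixes f :: "real \<Rightarrow> real" and X Y :: "'a \<Rightarrow> real"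
  assumes lip: "C-lipschitz_on UNIV f" and bound: "\<And>x. \<bar>f x\<bar> \<le> C"
    and \<alpha>: "0 < \<alpha>" "\<alpha> \<le> 1" and [measurable]: "X \<in> borel_measurable M" "Y \<in> borel_measurable M"
    and B: "0 \<le> B" "(\<integral>\<^sup>+\<omega>. ennreal (\<bar>X \<omega> - Y \<omega>\<bar> powr \<alpha>) \<partial>M) \<le> ennreal B"
  shows "L2norm M (\<lambda>\<omega>. f (X \<omega>) - f (Y \<omega>)) \<le> 2 * C * sqrt B"
proof -
  have C: "0 \<le> C" using lipschitz_on_nonneg[OF lip] .
  have "(\<integral>\<^sup>+\<omega>. ennreal ((f (X \<omega>) - f (Y \<omega>))\<^sup>2) \<partial>M)
      \<le> (\<integral>\<^sup>+\<omega>. ennreal (4 * C\<^sup>2) * ennreal (\<bar>X \<omega> - Y \<omega>\<bar> powr \<alpha>) \<partial>M)"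
    using bounded_lipschitz_diff_sq_le_powr[OF lip bound \<alpha>]
    by (intro nn_integral_mono) (simp add: ennreal_mult[symmetric] ennreal_leI)
  also have "\<dots> = ennreal (4 * C\<^sup>2) * (\<integral>\<^sup>+\<omega>. ennreal (\<bar>X \<omega> - Y \<omega>\<bar> powr \<alpha>) \<partial>M)"
    by (rule nn_integral_cmult) measurable
  also have "\<dots> \<le> ennreal (4 * C\<^sup>2 * B)"
    using B by (simp add: ennreal_mult mult_left_mono)
  finally have "(\<integral>\<omega>. (f (X \<omega>) - f (Y \<omega>))\<^sup>2 \<partial>M) \<le> 4 * C\<^sup>2 * B"
    using B by (intro integral_real_bounded) auto
  then have "L2norm M (\<lambda>\<omega>. f (X \<omega>) - f (Y \<omega>)) \<le> sqrt (4 * C\<^sup>2 * B)"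
    unfolding L2norm_def by (rule real_sqrt_le_mono)
  also have "\<dots> = 2 * C * sqrt B"
    using C by (simp add: real_sqrt_mult)
  finally show ?thesis .
qed

lemma lipschitz_of_bounded_deriv:
  fixes f f' :: "real \<Rightarrow> real"
  assumes "\<And>x. (f has_real_derivative f' x) (at x)" "\<And>x. \<bar>f' x\<bar> \<le> C" "0 \<le> C"
  shows "C-lipschitz_on UNIV f"
proof (rule bounded_derivative_imp_lipschitz)
  show "(f has_derivative (*) (f' x)) (at x within UNIV)" for x
    using assms(1)[of x] by (simp add: has_field_derivative_def)
  show "onorm ((*) (f' x)) \<le> C" for x
    using assms(2)[of x] by (intro onorm_le) (simp add: abs_mult mult_right_mono)
qed (use assms in auto)

lemma omega_l_bounds:
  assumes "\<And>u. L2norm M (\<lambda>\<omega>. F1l M R (eps 0) l u (eproc G eps (int i) \<omega>)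
                           - F1l M R (eps 0) l u (estar G eps eps' i \<omega>)) \<le> B"
  shows "0 \<le> omega_l M R G eps eps' l i" "omega_l M R G eps eps' l i \<le> B"
proof -
  have "bdd_above (range (\<lambda>u. L2norm M (\<lambda>\<omega>. F1l M R (eps 0) l u (eproc G eps (int i) \<omega>)
                                      - F1l M R (eps 0) l u (estar G eps eps' i \<omega>))))"
    using assms by (intro bdd_aboveI2)
  then show "0 \<le> omega_l M R G eps eps' l i"
    unfolding omega_l_def by (rule cSUP_upper2[of _ _ 0]) (simp_all add: L2norm_nonneg)
  show "omega_l M R G eps eps' l i \<le> B"
    unfolding omega_l_def by (rule cSUP_least) (auto intro: assms)
qed

lemma abs_le_of_SUP_abs_add_less:
  fixes f g :: "'a \<Rightarrow> 'b \<Rightarrow> real"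
  assumes "bdd_above (range (\<lambda>(u, v). \<bar>f u v\<bar>)) \<and> bdd_above (range (\<lambda>(u, v). \<bar>g u v\<bar>)) \<and>
      (SUP (u, v). \<bar>f u v\<bar>) + (SUP (u, v). \<bar>g u v\<bar>) < C"
  shows "\<bar>f u v\<bar> \<le> C" "\<bar>g u v\<bar> \<le> C"
proof -
  have "\<bar>f u v\<bar> \<le> (SUP (u, v). \<bar>f u v\<bar>)" "\<bar>g u v\<bar> \<le> (SUP (u, v). \<bar>g u v\<bar>)"
    using assms by (auto intro: cSUP_upper2[of _ _ "(u, v)"])
  moreover have "0 \<le> (SUP (u, v). \<bar>f u v\<bar>)" "0 \<le> (SUP (u, v). \<bar>g u v\<bar>)"
    using assms by (auto intro: cSUP_upper2[of _ _ "(u, v)"])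
  ultimately show "\<bar>f u v\<bar> \<le> C" "\<bar>g u v\<bar> \<le> C" using assms by linarith+
qed

lemma bigo_summable_of_geometric_bound:
  fixes f :: "nat \<Rightarrow> real"
  assumes f: "\<And>i. 0 \<le> f i" "\<And>i. f i \<le> K * r ^ i" and r: "0 \<le> r" "r \<le> chi" "chi < 1"
  shows "f \<in> O(\<lambda>i. chi ^ i)" "summable f"
proof -
  have "0 \<le> K" using f[of 0] by simp
  then have le: "f i \<le> K * chi ^ i" for i
    using f(2)[of i] r by (meson mult_left_mono order_trans power_mono)
  show "f \<in> O(\<lambda>i. chi ^ i)"
    by (rule bigoI[of _ K]) (use f le r in \<open>auto intro: always_eventually\<close>)
  show "summable f"
    by (rule summable_comparison_test[of _ "\<lambda>i. K * chi ^ i"])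
      (use f le r in \<open>auto intro: summable_mult summable_geometric\<close>)
qed

section \<open>I.i.d. innovations\<close>

locale iid_noise = prob_space M for M :: "'a measure" +
  fixes N :: "'e measure" and eps :: "int \<Rightarrow> 'a \<Rightarrow> 'e" and eps' :: "'a \<Rightarrow> 'e"
  assumes indep: "indep_vars (\<lambda>_. N)
      (\<lambda>j. case j of None \<Rightarrow> eps' | Some i \<Rightarrow> eps i) (UNIV :: int option set)"
    and ident: "\<And>i. distr M N (eps i) = distr M N (eps 0)"
    and ident': "distr M N eps' = distr M N (eps 0)"
begin

definition noise :: "int option \<Rightarrow> 'a \<Rightarrow> 'e" where
  "noise j = (case j of None \<Rightarrow> eps' | Some i \<Rightarrow> eps i)"

definition noise_law :: "'e measure" where
  "noise_law = distr M N (eps 0)"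

lemma noise_simps [simp]: "noise None = eps'" "noise (Some i) = eps i"
  by (simp_all add: noise_def)

lemma indep_noise: "indep_vars (\<lambda>_. N) noise UNIV"
  using indep unfolding noise_def[abs_def] .

lemma measurable_noise [measurable]: "noise j \<in> measurable M N"
  using indep_noise unfolding indep_vars_def by auto

lemma measurable_eps [measurable]: "eps i \<in> measurable M N"
  using measurable_noise[of "Some i"] by simp

lemma distr_eps: "distr M N (eps i) = noise_law"
  using ident[of i] by (simp add: noise_law_def)

lemma distr_noise: "distr M N (noise j) = noise_law"
  by (cases j) (simp_all add: distr_eps ident' flip: noise_law_def)

lemma prob_space_noise_law: "prob_space noise_law"
  unfolding noise_law_def by (rule prob_space_distr) simp

lemma sets_noise_law [simp]: "sets noise_law = sets N"
  by (simp add: noise_law_def)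

lemma measurable_noise_seq:
  "(\<lambda>\<omega> k. noise (\<sigma> k) \<omega>) \<in> measurable M (Pi\<^sub>M UNIV (\<lambda>_. N))"
  by (rule measurable_PiM_single') (auto simp: measurable_space[OF measurable_noise])

lemma distr_noise_seq:
  assumes "inj \<sigma>"
  shows "distr M (Pi\<^sub>M UNIV (\<lambda>_. N)) (\<lambda>\<omega> k. noise (\<sigma> k) \<omega>) = Pi\<^sub>M UNIV (\<lambda>_. noise_law)"
proof -
  interpret noise_law: prob_space noise_law by (rule prob_space_noise_law)
  have reindex: "(\<lambda>x k. x (\<sigma> k)) \<in> measurable (Pi\<^sub>M UNIV (\<lambda>_. N)) (Pi\<^sub>M UNIV (\<lambda>_. N))"
    by (rule measurable_PiM_single') (auto simp: space_PiM)
  have joint: "distr M (Pi\<^sub>M UNIV (\<lambda>_. N)) (\<lambda>\<omega> j. noise j \<omega>) = Pi\<^sub>M UNIV (\<lambda>_. noise_law)"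
    using indep_vars_iff_distr_eq_PiM[where I = UNIV and M' = "\<lambda>_. N" and X = noise] indep_noise
    by (simp add: distr_noise restrict_UNIV)
  have "distr M (Pi\<^sub>M UNIV (\<lambda>_. N)) (\<lambda>\<omega> k. noise (\<sigma> k) \<omega>)
      = distr (distr M (Pi\<^sub>M UNIV (\<lambda>_. N)) (\<lambda>\<omega> j. noise j \<omega>)) (Pi\<^sub>M UNIV (\<lambda>_. N)) (\<lambda>x k. x (\<sigma> k))"
    by (subst distr_distr[OF reindex measurable_noise_seq[where \<sigma> = id, simplified]]) (simp add: comp_def)
  also have "\<dots> = distr (Pi\<^sub>M UNIV (\<lambda>_. noise_law)) (Pi\<^sub>M UNIV (\<lambda>_. noise_law)) (\<lambda>x. \<lambda>n\<in>UNIV. x (\<sigma> n))"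
    unfolding joint by (intro distr_cong sets_PiM_cong) auto
  also have "\<dots> = Pi\<^sub>M UNIV (\<lambda>_. noise_law)"
    using distr_PiM_reindex[of UNIV "\<lambda>_. noise_law" \<sigma> UNIV] assms prob_space_noise_law by simp
  finally show ?thesis .
qed

lemma indep_var_noise_blocks:
  assumes "A \<inter> B = {}"
  shows "indep_var (Pi\<^sub>M A (\<lambda>_. N)) (\<lambda>\<omega>. \<lambda>i\<in>A. noise i \<omega>) (Pi\<^sub>M B (\<lambda>_. N)) (\<lambda>\<omega>. \<lambda>i\<in>B. noise i \<omega>)"
  by (rule indep_var_restrict[OF indep_noise assms]) auto

lemma nn_integral_prod_eps:
  fixes f :: "'i \<Rightarrow> 'e \<Rightarrow> ennreal" and \<tau> :: "'i \<Rightarrow> int"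
  assumes J: "finite J" and inj: "inj_on \<tau> J" and f: "\<And>j. j \<in> J \<Longrightarrow> f j \<in> borel_measurable N"
  shows "(\<integral>\<^sup>+\<omega>. (\<Prod>j\<in>J. f j (eps (\<tau> j) \<omega>)) \<partial>M) = (\<Prod>j\<in>J. \<integral>\<^sup>+z. f j z \<partial>noise_law)"
proof -
  define s where "s j = Some (\<tau> j)" for j
  have inj_s: "inj_on s J" using inj by (auto simp: inj_on_def s_def)
  define h where "h k = f (the_inv_into J s k)" for k
  have h_s: "h (s j) = f j" if "j \<in> J" for j
    using the_inv_into_f_f[OF inj_s that] by (simp add: h_def)
  have "indep_vars (\<lambda>_. borel) (\<lambda>k \<omega>. h k (noise k \<omega>)) (s ` J)"
    using f by (intro indep_vars_compose2[OF indep_vars_subset[OF indep_noise]]) (auto simp: h_s)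
  then have "(\<integral>\<^sup>+\<omega>. (\<Prod>k\<in>s ` J. h k (noise k \<omega>)) \<partial>M) = (\<Prod>k\<in>s ` J. \<integral>\<^sup>+\<omega>. h k (noise k \<omega>) \<partial>M)"
    using J by (intro indep_vars_nn_integral) auto
  moreover have "(\<integral>\<^sup>+\<omega>. f j (eps (\<tau> j) \<omega>) \<partial>M) = (\<integral>\<^sup>+z. f j z \<partial>noise_law)" if "j \<in> J" for j
  proof -
    have "(\<integral>\<^sup>+\<omega>. f j (eps (\<tau> j) \<omega>) \<partial>M) = (\<integral>\<^sup>+z. f j z \<partial>distr M N (eps (\<tau> j)))"
      using f[OF that] by (intro nn_integral_distr[symmetric]) simp_all
    then show ?thesis by (simp add: distr_eps)
  qed
  moreover have "(\<Prod>k\<in>s ` J. h k (noise k \<omega>)) = (\<Prod>j\<in>J. f j (eps (\<tau> j) \<omega>))" for \<omega>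
    unfolding prod.reindex[OF inj_s] by (intro prod.cong) (auto simp: h_s[unfolded s_def] s_def)
  moreover have "(\<Prod>k\<in>s ` J. \<integral>\<^sup>+\<omega>. h k (noise k \<omega>) \<partial>M) = (\<Prod>j\<in>J. \<integral>\<^sup>+\<omega>. f j (eps (\<tau> j) \<omega>) \<partial>M)"
    unfolding prod.reindex[OF inj_s] by (intro prod.cong) (auto simp: h_s[unfolded s_def] s_def)
  ultimately show ?thesis by simp
qed

lemma nn_integral_prod_mult_eps:
  assumes [measurable]: "h \<in> borel_measurable N" "f \<in> borel_measurable N"
  shows "(\<integral>\<^sup>+\<omega>. (\<Prod>i<j. h (eps (- int i) \<omega>)) * f (eps (- int j) \<omega>) \<partial>M)
    = (\<integral>\<^sup>+z. h z \<partial>noise_law) ^ j * (\<integral>\<^sup>+z. f z \<partial>noise_law)"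
proof -
  define g where "g i = (if i = j then f else h)" for i
  have "(\<Prod>i<j. h (eps (- int i) \<omega>)) * f (eps (- int j) \<omega>) = (\<Prod>i<Suc j. g i (eps (- int i) \<omega>))" for \<omega>
    by (simp add: g_def)
  then have "(\<integral>\<^sup>+\<omega>. (\<Prod>i<j. h (eps (- int i) \<omega>)) * f (eps (- int j) \<omega>) \<partial>M)
      = (\<integral>\<^sup>+\<omega>. (\<Prod>i<Suc j. g i (eps (- int i) \<omega>)) \<partial>M)"
    by (simp only:)
  also have "\<dots> = (\<Prod>i<Suc j. \<integral>\<^sup>+z. g i z \<partial>noise_law)"
    by (rule nn_integral_prod_eps) (auto simp: inj_on_def g_def)
  finally show ?thesis by (simp add: g_def)
qed

lemma nn_integral_sum_prod_mult_eps_le: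
  fixes h f :: "'e \<Rightarrow> real"
  assumes [measurable]: "h \<in> borel_measurable N" "f \<in> borel_measurable N"
    and nonneg: "\<And>z. 0 \<le> h z" "\<And>z. 0 \<le> f z"
  shows "(\<integral>\<^sup>+\<omega>. ennreal (\<Sum>j<m. (\<Prod>i<j. h (eps (- int i) \<omega>)) * f (eps (- int j) \<omega>)) \<partial>M)
    \<le> (\<Sum>j. (\<integral>\<^sup>+z. h z \<partial>noise_law) ^ j) * (\<integral>\<^sup>+z. f z \<partial>noise_law)"
proof -
  have "(\<integral>\<^sup>+\<omega>. ennreal (\<Sum>j<m. (\<Prod>i<j. h (eps (- int i) \<omega>)) * f (eps (- int j) \<omega>)) \<partial>M)
      = (\<Sum>j<m. \<integral>\<^sup>+\<omega>. (\<Prod>i<j. ennreal (h (eps (- int i) \<omega>))) * ennreal (f (eps (- int j) \<omega>)) \<partial>M)"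
    by (simp add: nonneg prod_nonneg nn_integral_sum prod_ennreal ennreal_mult flip: sum_ennreal)
  also have "\<dots> = (\<Sum>j<m. (\<integral>\<^sup>+z. h z \<partial>noise_law) ^ j * (\<integral>\<^sup>+z. f z \<partial>noise_law))"
    by (intro sum.cong refl nn_integral_prod_mult_eps; measurable)
  also have "\<dots> \<le> (\<Sum>j. (\<integral>\<^sup>+z. h z \<partial>noise_law) ^ j * (\<integral>\<^sup>+z. f z \<partial>noise_law))"
    by (intro sum_le_suminf) auto
  finally show ?thesis by simp
qed

lemma nn_integral_mult_noise_blocks:
  fixes f g :: "(int option \<Rightarrow> 'e) \<Rightarrow> ennreal"
  assumes AB: "A \<inter> B = {}" and f: "f \<in> borel_measurable (Pi\<^sub>M A (\<lambda>_. N))"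
    and g: "g \<in> borel_measurable (Pi\<^sub>M B (\<lambda>_. N))"
  shows "(\<integral>\<^sup>+\<omega>. f (\<lambda>i\<in>A. noise i \<omega>) * g (\<lambda>i\<in>B. noise i \<omega>) \<partial>M)
       = (\<integral>\<^sup>+\<omega>. f (\<lambda>i\<in>A. noise i \<omega>) \<partial>M) * (\<integral>\<^sup>+\<omega>. g (\<lambda>i\<in>B. noise i \<omega>) \<partial>M)"
proof -
  define U where "U = f \<circ> (\<lambda>\<omega>. \<lambda>i\<in>A. noise i \<omega>)"
  define V where "V = g \<circ> (\<lambda>\<omega>. \<lambda>i\<in>B. noise i \<omega>)"
  have "indep_var borel U borel V"
    unfolding U_def V_def by (rule indep_var_compose[OF indep_var_noise_blocks[OF AB] f g])
  then have "indep_vars (\<lambda>_. borel) (case_bool U V) UNIV"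
    unfolding indep_var_def by (simp add: case_bool_if if_distrib)
  then have "(\<integral>\<^sup>+\<omega>. (\<Prod>b\<in>UNIV. case_bool U V b \<omega>) \<partial>M) = (\<Prod>b\<in>UNIV. \<integral>\<^sup>+\<omega>. case_bool U V b \<omega> \<partial>M)"
    by (intro indep_vars_nn_integral) auto
  then show ?thesis by (simp add: UNIV_bool U_def V_def mult.commute comp_def)
qed

lemma AE_noise_seq_transfer:
  assumes "inj \<sigma>" "inj \<sigma>'" and [measurable]: "Measurable.pred (Pi\<^sub>M UNIV (\<lambda>_. N)) P"
    and "AE \<omega> in M. P (\<lambda>k. noise (\<sigma> k) \<omega>)"
  shows "AE \<omega> in M. P (\<lambda>k. noise (\<sigma>' k) \<omega>)"
proof -
  have "AE x in distr M (Pi\<^sub>M UNIV (\<lambda>_. N)) (\<lambda>\<omega> k. noise (\<sigma> k) \<omega>). P x"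
    using assms(4) by (subst AE_distr_iff) (auto intro: measurable_noise_seq)
  then have "AE x in distr M (Pi\<^sub>M UNIV (\<lambda>_. N)) (\<lambda>\<omega> k. noise (\<sigma>' k) \<omega>). P x"
    unfolding distr_noise_seq[OF assms(1)] distr_noise_seq[OF assms(2)] .
  then show ?thesis
    by (subst (asm) AE_distr_iff) (auto intro: measurable_noise_seq)
qed

end

section \<open>The iterated random function\<close>

locale iterated_random_function = iid_noise M N eps eps'
    for M :: "'a measure" and N :: "'e measure" and eps eps' +
  fixes R :: "real \<Rightarrow> 'e \<Rightarrow> real" and G :: "(nat \<Rightarrow> 'e) \<Rightarrow> real" and q t0 :: real
  assumes R_meas: "(\<lambda>(x, z). R x z) \<in> borel_measurable (borel \<Otimes>\<^sub>M N)"
    and q: "q > 0"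
    and lip_fin: "AE \<omega> in M. lipR R (eps 0 \<omega>) < \<infinity>"
    and Lq: "integrable M (\<lambda>\<omega>. (enn2real (lipR R (eps 0 \<omega>)) + \<bar>R t0 (eps 0 \<omega>)\<bar>) powr q)"
    and Elog: "(\<integral>\<^sup>+ \<omega>. log_pos (lipR R (eps 0 \<omega>)) \<partial>M)
                 < (\<integral>\<^sup>+ \<omega>. log_neg (lipR R (eps 0 \<omega>)) \<partial>M)"
    and G_meas: "G \<in> borel_measurable (Pi\<^sub>M UNIV (\<lambda>_. N))"
    and stationary: "\<And>i. AE \<omega> in M. eproc G eps i \<omega> = R (eproc G eps (i - 1) \<omega>) (eps i \<omega>)"
begin

lemma measurable_R [measurable]:
  assumes [measurable]: "f \<in> borel_measurable K" "g \<in> measurable K N"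
  shows "(\<lambda>x. R (f x) (g x)) \<in> borel_measurable K"
  using measurable_compose[of "\<lambda>x. (f x, g x)" K "borel \<Otimes>\<^sub>M N", OF _ R_meas] by simp

lemma borel_measurable_rat_lip_R [measurable]: "rat_lip R \<in> borel_measurable N"
  using R_meas by measurable

lemma measurable_G_reindex:
  assumes "range \<sigma> \<subseteq> B"
  shows "(\<lambda>y. G (\<lambda>m. y (\<sigma> m))) \<in> borel_measurable (Pi\<^sub>M B (\<lambda>_. N))"
proof -
  have "(\<lambda>y. y (\<sigma> m)) \<in> measurable (Pi\<^sub>M B (\<lambda>_. N)) N" for m
    using assms by (intro measurable_component_singleton) auto
  then have "(\<lambda>y m. y (\<sigma> m)) \<in> measurable (Pi\<^sub>M B (\<lambda>_. N)) (Pi\<^sub>M UNIV (\<lambda>_. N))"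
    using assms by (intro measurable_PiM_single') (auto simp: space_PiM PiE_iff)
  from measurable_compose[OF this G_meas] show ?thesis by (simp add: comp_def)
qed

lemma measurable_G_noise_seq: "(\<lambda>\<omega>. G (\<lambda>k. noise (\<sigma> k) \<omega>)) \<in> borel_measurable M"
  using measurable_compose[OF measurable_noise_seq G_meas] by (simp add: comp_def)

lemma AE_rat_lip_bound: "AE z in noise_law. \<bar>R a z - R b z\<bar> \<le> rat_lip R z * \<bar>a - b\<bar>"
proof -
  have "AE \<omega> in M. \<bar>R a (eps 0 \<omega>) - R b (eps 0 \<omega>)\<bar> \<le> rat_lip R (eps 0 \<omega>) * \<bar>a - b\<bar>"
    using lip_fin
  proof eventually_elim
    case (elim \<omega>)
    show ?case using lipschitz_on_normD[OF lipschitz_rat_lip[OF elim], of a b] by simp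
  qed
  then show ?thesis unfolding noise_law_def by (subst AE_distr_iff) auto
qed

text \<open>Independence of eps k from the arguments turns AE_rat_lip_bound, where the arguments are
  fixed, into this bound (Fubini); this is where the measurability of rat_lip R is needed.\<close>
lemma AE_lipschitz_indep:
  fixes fa fb :: "(int option \<Rightarrow> 'e) \<Rightarrow> real"
  assumes k: "Some k \<notin> B" and [measurable]: "fa \<in> borel_measurable (Pi\<^sub>M B (\<lambda>_. N))"
      "fb \<in> borel_measurable (Pi\<^sub>M B (\<lambda>_. N))"
  shows "AE \<omega> in M. \<bar>R (fa (\<lambda>i\<in>B. noise i \<omega>)) (eps k \<omega>) - R (fb (\<lambda>i\<in>B. noise i \<omega>)) (eps k \<omega>)\<bar>
                     \<le> rat_lip R (eps k \<omega>) * \<bar>fa (\<lambda>i\<in>B. noise i \<omega>) - fb (\<lambda>i\<in>B. noise i \<omega>)\<bar>"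
proof -
  let ?K = "Pi\<^sub>M {Some k} (\<lambda>_. N)"
  define P where "P y y' \<longleftrightarrow>
    \<bar>R (fa y) (y' (Some k)) - R (fb y) (y' (Some k))\<bar> \<le> rat_lip R (y' (Some k)) * \<bar>fa y - fb y\<bar>" for y y'
  have [measurable]: "(\<lambda>y'. y' (Some k)) \<in> measurable ?K N"
    by (rule measurable_component_singleton) simp
  have "AE \<omega> in M. P (\<lambda>i\<in>B. noise i \<omega>) (\<lambda>i\<in>{Some k}. noise i \<omega>)"
  proof (rule AE_indep_var_pred[where P = P])
    show "indep_var (Pi\<^sub>M B (\<lambda>_. N)) (\<lambda>\<omega>. \<lambda>i\<in>B. noise i \<omega>) ?K (\<lambda>\<omega>. \<lambda>i\<in>{Some k}. noise i \<omega>)"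
      using k by (auto intro: indep_var_noise_blocks)
    show "{x \<in> space (Pi\<^sub>M B (\<lambda>_. N) \<Otimes>\<^sub>M ?K). P (fst x) (snd x)} \<in> sets (Pi\<^sub>M B (\<lambda>_. N) \<Otimes>\<^sub>M ?K)"
      unfolding P_def by measurable
    fix y
    have "AE z in distr M N (eps k). \<bar>R (fa y) z - R (fb y) z\<bar> \<le> rat_lip R z * \<bar>fa y - fb y\<bar>"
      unfolding distr_eps by (rule AE_rat_lip_bound)
    then have "AE \<omega> in M. P y (\<lambda>i\<in>{Some k}. noise i \<omega>)"
      by (subst (asm) AE_distr_iff) (auto simp: P_def)
    then show "AE y' in distr M ?K (\<lambda>\<omega>. \<lambda>i\<in>{Some k}. noise i \<omega>). P y y'"
      by (subst AE_distr_iff) (auto simp: P_def)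
  qed
  then show ?thesis by (simp add: P_def)
qed

definition past :: "int \<Rightarrow> nat \<Rightarrow> int option" where
  "past i k = Some (i - int k)"

text \<open>Position k of F_i^* holds the innovation at time i - k, except that time 0 holds
  eps' = noise None.\<close>
definition past_coupled :: "nat \<Rightarrow> nat \<Rightarrow> int option" where
  "past_coupled i k = (if int i - int k = 0 then None else Some (int i - int k))"

lemma past_coupled_Suc_Suc [simp]: "past_coupled (Suc i) (Suc k) = past_coupled i k"
  and past_coupled_Suc_0 [simp]: "past_coupled (Suc i) 0 = Some (int (Suc i))"
  by (simp_all add: past_coupled_def)

lemma inj_past: "inj (past i)"
  by (auto simp: inj_def past_def)

lemma inj_past_coupled: "inj (past_coupled i)"
  by (auto simp: inj_def past_coupled_def split: if_splits)

lemma eproc_eq_G_noise: "eproc G eps i = (\<lambda>\<omega>. G (\<lambda>k. noise (past i k) \<omega>))"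
  by (simp add: fun_eq_iff eproc_def past_def)

lemma estar_eq_G_noise: "estar G eps eps' i = (\<lambda>\<omega>. G (\<lambda>k. noise (past_coupled i k) \<omega>))"
  unfolding estar_def past_coupled_def by (intro ext arg_cong[where f = G]) simp

lemma borel_measurable_eproc [measurable]: "eproc G eps i \<in> borel_measurable M"
  unfolding eproc_eq_G_noise by (rule measurable_G_noise_seq)

lemma borel_measurable_estar [measurable]: "estar G eps eps' i \<in> borel_measurable M"
  unfolding estar_eq_G_noise by (rule measurable_G_noise_seq)

definition stationary_law :: "real measure" where
  "stationary_law = distr (Pi\<^sub>M UNIV (\<lambda>_. noise_law)) borel G"

lemma distr_G_noise_seq:
  assumes "inj \<sigma>"
  shows "distr M borel (\<lambda>\<omega>. G (\<lambda>k. noise (\<sigma> k) \<omega>)) = stationary_law"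
proof -
  have "distr M borel (\<lambda>\<omega>. G (\<lambda>k. noise (\<sigma> k) \<omega>))
      = distr (distr M (Pi\<^sub>M UNIV (\<lambda>_. N)) (\<lambda>\<omega> k. noise (\<sigma> k) \<omega>)) borel G"
    by (subst distr_distr[OF G_meas measurable_noise_seq]) (simp add: comp_def)
  then show ?thesis unfolding distr_noise_seq[OF assms] stationary_law_def .
qed

lemma distr_eproc: "distr M borel (eproc G eps i) = stationary_law"
  unfolding eproc_eq_G_noise by (rule distr_G_noise_seq[OF inj_past])

lemma distr_estar: "distr M borel (estar G eps eps' i) = stationary_law"
  unfolding estar_eq_G_noise by (rule distr_G_noise_seq[OF inj_past_coupled])

text \<open>The recursion G x = R (G (shift x)) (x 0) holds for almost every i.i.d. path, since it holds
  along the path of e_i; hence also along the coupled path.\<close>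
lemma AE_estar_Suc:
  "AE \<omega> in M. estar G eps eps' (Suc i) \<omega> = R (estar G eps eps' i \<omega>) (eps (int (Suc i)) \<omega>)"
proof -
  let ?P = "Pi\<^sub>M UNIV (\<lambda>_::nat. N)"
  have [measurable]: "(\<lambda>x. G (\<lambda>k. x (Suc k))) \<in> borel_measurable ?P"
    by (rule measurable_G_reindex) simp
  have [measurable]: "G \<in> borel_measurable ?P" by (rule G_meas)
  have [measurable]: "(\<lambda>x. x 0) \<in> measurable ?P N"
    by (rule measurable_component_singleton) simp
  define P where "P x \<longleftrightarrow> G x = R (G (\<lambda>k. x (Suc k))) (x 0)" for x
  have P_meas: "Measurable.pred ?P P" unfolding P_def pred_def by measurable
  have "AE \<omega> in M. P (\<lambda>k. noise (past (int (Suc i)) k) \<omega>)"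
    using stationary[of "int (Suc i)"]
    by eventually_elim (simp add: P_def eproc_eq_G_noise past_def algebra_simps)
  from AE_noise_seq_transfer[OF inj_past inj_past_coupled[of "Suc i"] P_meas this]
  show ?thesis
    by eventually_elim (simp add: P_def estar_eq_G_noise)
qed

lemma G_restrict_noise:
  assumes "range \<sigma> \<subseteq> B"
  shows "G (\<lambda>m. (\<lambda>j\<in>B. noise j \<omega>) (\<sigma> m)) = G (\<lambda>m. noise (\<sigma> m) \<omega>)"
  using assms by (intro arg_cong[where f = G] ext) auto

lemma AE_coupling_step:
  "AE \<omega> in M. \<bar>eproc G eps (int (Suc i)) \<omega> - estar G eps eps' (Suc i) \<omega>\<bar>
     \<le> rat_lip R (eps (int (Suc i)) \<omega>) * \<bar>eproc G eps (int i) \<omega> - estar G eps eps' i \<omega>\<bar>"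
proof -
  define B where "B = range (past (int i)) \<union> range (past_coupled i)"
  have B: "range (past (int i)) \<subseteq> B" "range (past_coupled i) \<subseteq> B"
    by (auto simp: B_def)
  have "Some (int (Suc i)) \<notin> B"
    by (auto simp: B_def past_def past_coupled_def split: if_splits)
  from AE_lipschitz_indep[OF this measurable_G_reindex[OF B(1)] measurable_G_reindex[OF B(2)]]
    stationary[of "int (Suc i)"] AE_estar_Suc[of i]
  show ?thesis
    unfolding G_restrict_noise[OF B(1)] G_restrict_noise[OF B(2)]
    by eventually_elim (simp add: eproc_eq_G_noise estar_eq_G_noise)
qed

lemma AE_backward_step:
  "AE \<omega> in M. \<bar>eproc G eps (- int j) \<omega> - t0\<bar>
     \<le> rat_lip R (eps (- int j) \<omega>) * \<bar>eproc G eps (- int (Suc j)) \<omega> - t0\<bar> + \<bar>R t0 (eps (- int j) \<omega>) - t0\<bar>"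
proof -
  define B where "B = range (past (- int (Suc j)))"
  have B: "range (past (- int (Suc j))) \<subseteq> B" by (simp add: B_def)
  have pred: "- int j - 1 = - int (Suc j)" by simp
  have "Some (- int j) \<notin> B" by (auto simp: B_def past_def)
  from AE_lipschitz_indep[OF this measurable_G_reindex[OF B] borel_measurable_const[of t0]]
    stationary[of "- int j", unfolded pred]
  show ?thesis
    unfolding G_restrict_noise[OF B]
  proof eventually_elim
    case (elim \<omega>)
    then have "\<bar>eproc G eps (- int j) \<omega> - R t0 (eps (- int j) \<omega>)\<bar>
        \<le> rat_lip R (eps (- int j) \<omega>) * \<bar>eproc G eps (- int (Suc j)) \<omega> - t0\<bar>"
      by (simp add: eproc_eq_G_noise)
    then show ?case by linarith
  qed
qed

lemma AE_backward_step_powr: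
  assumes "0 < \<alpha>" "\<alpha> \<le> 1"
  shows "AE \<omega> in M. \<bar>eproc G eps (- int j) \<omega> - t0\<bar> powr \<alpha>
     \<le> rat_lip R (eps (- int j) \<omega>) powr \<alpha> * \<bar>eproc G eps (- int (Suc j)) \<omega> - t0\<bar> powr \<alpha>
       + \<bar>R t0 (eps (- int j) \<omega>) - t0\<bar> powr \<alpha>"
  using AE_backward_step[of j]
proof eventually_elim
  case (elim \<omega>)
  have "\<bar>eproc G eps (- int j) \<omega> - t0\<bar> powr \<alpha>
      \<le> (rat_lip R (eps (- int j) \<omega>) * \<bar>eproc G eps (- int (Suc j)) \<omega> - t0\<bar>
        + \<bar>R t0 (eps (- int j) \<omega>) - t0\<bar>) powr \<alpha>"
    using elim assms by (intro powr_mono2) auto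
  also have "\<dots> \<le> (rat_lip R (eps (- int j) \<omega>) * \<bar>eproc G eps (- int (Suc j)) \<omega> - t0\<bar>) powr \<alpha>
      + \<bar>R t0 (eps (- int j) \<omega>) - t0\<bar> powr \<alpha>"
    using assms by (intro powr_add_le_add_powr) (auto simp: rat_lip_nonneg)
  finally show ?case by (simp add: powr_mult rat_lip_nonneg)
qed

lemma AE_coupling_contraction:
  assumes "0 < \<alpha>"
  shows "AE \<omega> in M. \<bar>eproc G eps (int i) \<omega> - estar G eps eps' i \<omega>\<bar> powr \<alpha>
     \<le> (\<Prod>k<i. rat_lip R (eps (int (Suc k)) \<omega>) powr \<alpha>)
       * \<bar>eproc G eps 0 \<omega> - estar G eps eps' 0 \<omega>\<bar> powr \<alpha>"
proof -
  define \<Delta> where "\<Delta> k \<omega> = \<bar>eproc G eps (int k) \<omega> - estar G eps eps' k \<omega>\<bar> powr \<alpha>" for k \<omega>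
  have "AE \<omega> in M. \<Delta> (Suc k) \<omega> \<le> rat_lip R (eps (int (Suc k)) \<omega>) powr \<alpha> * \<Delta> k \<omega>" for k
    using AE_coupling_step[of k]
    by eventually_elim
      (use assms in \<open>auto simp: \<Delta>_def rat_lip_nonneg simp flip: powr_mult intro: powr_mono2\<close>)
  then have "AE \<omega> in M. \<forall>k. \<Delta> (Suc k) \<omega> \<le> rat_lip R (eps (int (Suc k)) \<omega>) powr \<alpha> * \<Delta> k \<omega>"
    by (simp add: AE_all_countable)
  then show ?thesis
  proof eventually_elim
    case (elim \<omega>)
    have "\<Delta> i \<omega> \<le> (\<Prod>k<i. rat_lip R (eps (int (Suc k)) \<omega>) powr \<alpha>) * \<Delta> 0 \<omega>"
      using elim by (intro prod_recurrence_le[where d = "\<lambda>k. \<Delta> k \<omega>"]) auto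
    then show ?case by (simp add: \<Delta>_def)
  qed
qed

lemma integrable_powr_le_lipschitz_moment:
  assumes [measurable]: "f \<in> borel_measurable M" and "0 < \<alpha>" "\<alpha> \<le> q"
    and bound: "AE \<omega> in M. 0 \<le> f \<omega> \<and> f \<omega> \<le> enn2real (lipR R (eps 0 \<omega>)) + \<bar>R t0 (eps 0 \<omega>)\<bar>"
  shows "integrable M (\<lambda>\<omega>. f \<omega> powr \<alpha>)"
proof (rule Bochner_Integration.integrable_bound)
  show "integrable M (\<lambda>\<omega>. 1 + (enn2real (lipR R (eps 0 \<omega>)) + \<bar>R t0 (eps 0 \<omega>)\<bar>) powr q)"
    using Lq by simp
  show "AE \<omega> in M. norm (f \<omega> powr \<alpha>)
      \<le> norm (1 + (enn2real (lipR R (eps 0 \<omega>)) + \<bar>R t0 (eps 0 \<omega>)\<bar>) powr q)"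
    using bound
  proof eventually_elim
    case (elim \<omega>)
    let ?L = "enn2real (lipR R (eps 0 \<omega>)) + \<bar>R t0 (eps 0 \<omega>)\<bar>"
    have "f \<omega> powr \<alpha> \<le> ?L powr \<alpha>" using elim assms by (intro powr_mono2) auto
    also have "\<dots> \<le> 1 + ?L powr q" using assms by (intro powr_le_one_add_powr) auto
    finally show ?case using elim by simp
  qed
qed measurable

lemma AE_rat_lip_le_lipR:
  "AE \<omega> in M. ennreal (rat_lip R (eps 0 \<omega>)) \<le> lipR R (eps 0 \<omega>)
     \<and> rat_lip R (eps 0 \<omega>) \<le> enn2real (lipR R (eps 0 \<omega>))"
  using lip_fin
proof eventually_elim
  case (elim \<omega>)
  then have "rat_lip R (eps 0 \<omega>) \<le> enn2real (lipR R (eps 0 \<omega>))" by (rule rat_lip_le_lipR)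
  moreover have "ennreal (enn2real (lipR R (eps 0 \<omega>))) = lipR R (eps 0 \<omega>)" using elim by simp
  ultimately show ?case using ennreal_leI by metis
qed

lemma nn_integral_log_pos_rat_lip_less:
  "(\<integral>\<^sup>+\<omega>. log_pos (ennreal (rat_lip R (eps 0 \<omega>))) \<partial>M)
     < (\<integral>\<^sup>+\<omega>. log_neg (ennreal (rat_lip R (eps 0 \<omega>))) \<partial>M)"
proof -
  have "(\<integral>\<^sup>+\<omega>. log_pos (ennreal (rat_lip R (eps 0 \<omega>))) \<partial>M) \<le> (\<integral>\<^sup>+\<omega>. log_pos (lipR R (eps 0 \<omega>)) \<partial>M)"
    using AE_rat_lip_le_lipR by (intro nn_integral_mono_AE) (auto elim!: eventually_mono intro: log_pos_mono)
  also have "\<dots> < (\<integral>\<^sup>+\<omega>. log_neg (lipR R (eps 0 \<omega>)) \<partial>M)" by (rule Elog)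
  also have "\<dots> \<le> (\<integral>\<^sup>+\<omega>. log_neg (ennreal (rat_lip R (eps 0 \<omega>))) \<partial>M)"
    using AE_rat_lip_le_lipR by (intro nn_integral_mono_AE) (auto elim!: eventually_mono intro: log_neg_antimono)
  finally show ?thesis .
qed

lemma nn_integral_powr_R_t0_finite:
  assumes \<alpha>: "0 < \<alpha>" "\<alpha> \<le> 1" "\<alpha> \<le> q"
  shows "(\<integral>\<^sup>+z. ennreal (\<bar>R t0 z - t0\<bar> powr \<alpha>) \<partial>noise_law) < \<infinity>"
proof -
  have "(\<integral>\<^sup>+z. ennreal (\<bar>R t0 z - t0\<bar> powr \<alpha>) \<partial>noise_law)
      = (\<integral>\<^sup>+\<omega>. ennreal (\<bar>R t0 (eps 0 \<omega>) - t0\<bar> powr \<alpha>) \<partial>M)"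
    unfolding noise_law_def by (rule nn_integral_distr) auto
  also have "\<dots> \<le> (\<integral>\<^sup>+\<omega>. ennreal (\<bar>R t0 (eps 0 \<omega>)\<bar> powr \<alpha> + \<bar>t0\<bar> powr \<alpha>) \<partial>M)"
  proof (intro nn_integral_mono ennreal_leI)
    fix \<omega>
    have "\<bar>R t0 (eps 0 \<omega>) - t0\<bar> powr \<alpha> \<le> (\<bar>R t0 (eps 0 \<omega>)\<bar> + \<bar>t0\<bar>) powr \<alpha>"
      using \<alpha> by (intro powr_mono2) auto
    also have "\<dots> \<le> \<bar>R t0 (eps 0 \<omega>)\<bar> powr \<alpha> + \<bar>t0\<bar> powr \<alpha>"
      using \<alpha> by (intro powr_add_le_add_powr) auto
    finally show "\<bar>R t0 (eps 0 \<omega>) - t0\<bar> powr \<alpha> \<le> \<bar>R t0 (eps 0 \<omega>)\<bar> powr \<alpha> + \<bar>t0\<bar> powr \<alpha>" .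
  qed
  also have "\<dots> < \<infinity>"
    using \<alpha> by (subst nn_integral_eq_integral)
      (auto intro!: integrable_powr_le_lipschitz_moment AE_I2 add_increasing)
  finally show ?thesis .
qed

lemma exists_contracting_exponent:
  obtains \<alpha> where "0 < \<alpha>" "\<alpha> \<le> 1" "\<alpha> \<le> q"
    and "(\<integral>\<^sup>+z. ennreal (rat_lip R z powr \<alpha>) \<partial>noise_law) < 1"
proof -
  have "AE \<omega> in M. 0 \<le> rat_lip R (eps 0 \<omega>)
      \<and> rat_lip R (eps 0 \<omega>) \<le> enn2real (lipR R (eps 0 \<omega>)) + \<bar>R t0 (eps 0 \<omega>)\<bar>"
    using AE_rat_lip_le_lipR by eventually_elim (auto simp: rat_lip_nonneg add_increasing2)
  then have int: "integrable M (\<lambda>\<omega>. rat_lip R (eps 0 \<omega>) powr \<alpha>)" if "0 < \<alpha>" "\<alpha> \<le> q" for \<alpha>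
    using that by (intro integrable_powr_le_lipschitz_moment) auto
  have \<beta>: "0 < min 1 q" "min 1 q \<le> q" using q by auto
  have "(\<lambda>\<omega>. rat_lip R (eps 0 \<omega>)) \<in> borel_measurable M" by measurable
  from exists_powr_integral_less_one[OF this rat_lip_nonneg \<beta>(1) int[OF \<beta>]
      nn_integral_log_pos_rat_lip_less]
  obtain \<alpha> where \<alpha>: "0 < \<alpha>" "\<alpha> \<le> min 1 q" "(\<integral>\<omega>. rat_lip R (eps 0 \<omega>) powr \<alpha> \<partial>M) < 1"
    by blast
  have "(\<integral>\<^sup>+z. ennreal (rat_lip R z powr \<alpha>) \<partial>noise_law) = (\<integral>\<^sup>+\<omega>. ennreal (rat_lip R (eps 0 \<omega>) powr \<alpha>) \<partial>M)"
    unfolding noise_law_def by (rule nn_integral_distr) auto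
  also have "\<dots> = ennreal (\<integral>\<omega>. rat_lip R (eps 0 \<omega>) powr \<alpha> \<partial>M)"
    using \<alpha> by (intro nn_integral_eq_integral int) auto
  finally show ?thesis using that \<alpha> by simp
qed

lemma distr_comp_eproc:
  assumes [measurable]: "f \<in> borel_measurable borel"
  shows "distr M borel (\<lambda>\<omega>. f (eproc G eps i \<omega>)) = distr stationary_law borel f"
proof -
  have "distr M borel (\<lambda>\<omega>. f (eproc G eps i \<omega>)) = distr (distr M borel (eproc G eps i)) borel f"
    by (subst distr_distr) (auto simp: comp_def)
  then show ?thesis by (simp add: distr_eproc)
qed

text \<open>Unrolling the recursion backwards from time 0 to time -m bounds |e_0 - t0|^\<alpha> by a product of
  m contraction factors times |e_(-m) - t0|^\<alpha>, plus a geometric series; e_(-m) has the law of e_0.\<close>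
lemma nn_integral_powr_eproc_finite:
  assumes \<alpha>: "0 < \<alpha>" "\<alpha> \<le> 1"
    and \<rho>: "(\<integral>\<^sup>+z. ennreal (rat_lip R z powr \<alpha>) \<partial>noise_law) < 1"
    and c: "(\<integral>\<^sup>+z. ennreal (\<bar>R t0 z - t0\<bar> powr \<alpha>) \<partial>noise_law) < \<infinity>"
  shows "(\<integral>\<^sup>+\<omega>. ennreal (\<bar>eproc G eps 0 \<omega> - t0\<bar> powr \<alpha>) \<partial>M) < \<infinity>"
proof -
  define \<rho> where "\<rho> = (\<integral>\<^sup>+z. ennreal (rat_lip R z powr \<alpha>) \<partial>noise_law)"
  define c where "c = (\<integral>\<^sup>+z. ennreal (\<bar>R t0 z - t0\<bar> powr \<alpha>) \<partial>noise_law)"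
  define Y where "Y j \<omega> = \<bar>eproc G eps (- int j) \<omega> - t0\<bar> powr \<alpha>" for j \<omega>
  define l where "l j \<omega> = rat_lip R (eps (- int j) \<omega>) powr \<alpha>" for j \<omega>
  define d where "d j \<omega> = \<bar>R t0 (eps (- int j) \<omega>) - t0\<bar> powr \<alpha>" for j \<omega>
  have [measurable]: "Y j \<in> borel_measurable M" for j unfolding Y_def by measurable
  have [measurable]: "l j \<in> borel_measurable M" for j unfolding l_def by measurable
  have [measurable]: "d j \<in> borel_measurable M" for j unfolding d_def by measurable
  have l_nonneg: "0 \<le> l j \<omega>" and d_nonneg: "0 \<le> d j \<omega>" for j \<omega>
    by (simp_all add: l_def d_def)
  have "AE \<omega> in M. \<forall>j. Y j \<omega> \<le> l j \<omega> * Y (Suc j) \<omega> + d j \<omega>"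
    using AE_backward_step_powr[OF \<alpha>] by (simp add: AE_all_countable Y_def l_def d_def)
  then have dom: "AE \<omega> in M. Y 0 \<omega> \<le> (\<Prod>j<m. l j \<omega>) * Y m \<omega> + (\<Sum>j<m. (\<Prod>i<j. l i \<omega>) * d j \<omega>)" for m
    by eventually_elim (rule affine_recurrence_le, auto simp: l_nonneg)
  have prod_l: "(\<integral>\<^sup>+\<omega>. (\<Prod>j<m. ennreal (l j \<omega>)) \<partial>M) = \<rho> ^ m" for m
    using nn_integral_prod_eps[of "{..<m}" "\<lambda>j. - int j" "\<lambda>_ z. ennreal (rat_lip R z powr \<alpha>)"]
    by (simp add: l_def \<rho>_def inj_on_def)
  have "(\<integral>\<^sup>+\<omega>. ennreal (Y 0 \<omega>) \<partial>M) \<le> (\<Sum>j. \<rho> ^ j) * c"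
  proof (rule nn_integral_le_of_iterated_domination[where Y = Y and P = "\<lambda>m \<omega>. \<Prod>j<m. l j \<omega>"
        and S = "\<lambda>m \<omega>. \<Sum>j<m. (\<Prod>i<j. l i \<omega>) * d j \<omega>"])
    have "(\<lambda>x. \<bar>x - t0\<bar> powr \<alpha>) \<in> borel_measurable borel" by measurable
    from distr_comp_eproc[OF this] show "distr M borel (Y m) = distr M borel (Y 0)" for m
      unfolding Y_def by simp
    show "(\<lambda>m. \<integral>\<^sup>+\<omega>. ennreal (\<Prod>j<m. l j \<omega>) \<partial>M) \<longlonglongrightarrow> 0"
      using ennreal_power_tendsto_zero[OF \<rho>[folded \<rho>_def]]
      by (simp add: prod_l prod_ennreal l_nonneg flip: prod_l)
    show "(\<integral>\<^sup>+\<omega>. ennreal (\<Sum>j<m. (\<Prod>i<j. l i \<omega>) * d j \<omega>) \<partial>M) \<le> (\<Sum>j. \<rho> ^ j) * c" for m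
      using nn_integral_sum_prod_mult_eps_le[of "\<lambda>z. rat_lip R z powr \<alpha>" "\<lambda>z. \<bar>R t0 z - t0\<bar> powr \<alpha>" m]
      by (simp add: l_def d_def \<rho>_def c_def)
  qed (use dom l_nonneg d_nonneg in \<open>auto simp: prod_nonneg sum_nonneg\<close>)
  also have "\<dots> < \<infinity>"
    using suminf_power_ennreal_less_top[OF \<rho>[folded \<rho>_def]] c[folded c_def]
    by (simp add: ennreal_mult_less_top)
  finally show ?thesis by (simp add: Y_def)
qed

lemma nn_integral_powr_coupling_le:
  assumes \<alpha>: "0 < \<alpha>"
  shows "(\<integral>\<^sup>+\<omega>. ennreal (\<bar>eproc G eps (int i) \<omega> - estar G eps eps' i \<omega>\<bar> powr \<alpha>) \<partial>M)
    \<le> (\<integral>\<^sup>+z. ennreal (rat_lip R z powr \<alpha>) \<partial>noise_law) ^ i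
      * (\<integral>\<^sup>+\<omega>. ennreal (\<bar>eproc G eps 0 \<omega> - estar G eps eps' 0 \<omega>\<bar> powr \<alpha>) \<partial>M)"
proof -
  define A where "A = (\<lambda>k. Some (int (Suc k))) ` {..<i}"
  define fA where "fA y = (\<Prod>k<i. ennreal (rat_lip R (y (Some (int (Suc k)))) powr \<alpha>))"
    for y :: "int option \<Rightarrow> 'e"
  define gB where "gB y = ennreal (\<bar>G (\<lambda>m. y (past 0 m)) - G (\<lambda>m. y (past_coupled 0 m))\<bar> powr \<alpha>)"
    for y :: "int option \<Rightarrow> 'e"
  have B: "range (past 0) \<subseteq> - A" "range (past_coupled 0) \<subseteq> - A"
    by (auto simp: A_def past_def past_coupled_def)
  have "(\<lambda>y. y (Some (int (Suc k)))) \<in> measurable (Pi\<^sub>M A (\<lambda>_. N)) N" if "k < i" for k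
    using that by (intro measurable_component_singleton) (auto simp: A_def)
  then have fA: "fA \<in> borel_measurable (Pi\<^sub>M A (\<lambda>_. N))"
    unfolding fA_def by (intro borel_measurable_prod_ennreal) (auto intro: measurable_compose)
  have [measurable]: "(\<lambda>y. G (\<lambda>m. y (past 0 m))) \<in> borel_measurable (Pi\<^sub>M (- A) (\<lambda>_. N))"
    "(\<lambda>y. G (\<lambda>m. y (past_coupled 0 m))) \<in> borel_measurable (Pi\<^sub>M (- A) (\<lambda>_. N))"
    using measurable_G_reindex[OF B(1)] measurable_G_reindex[OF B(2)] .
  have gB: "gB \<in> borel_measurable (Pi\<^sub>M (- A) (\<lambda>_. N))"
    unfolding gB_def by measurable
  have fA_noise: "fA (\<lambda>j\<in>A. noise j \<omega>) = (\<Prod>k<i. ennreal (rat_lip R (eps (int (Suc k)) \<omega>) powr \<alpha>))" for \<omega>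
    unfolding fA_def by (intro prod.cong) (auto simp: A_def)
  have gB_noise: "gB (\<lambda>j\<in>- A. noise j \<omega>)
      = ennreal (\<bar>eproc G eps 0 \<omega> - estar G eps eps' 0 \<omega>\<bar> powr \<alpha>)" for \<omega>
    unfolding gB_def G_restrict_noise[OF B(1)] G_restrict_noise[OF B(2)]
    by (simp add: eproc_eq_G_noise estar_eq_G_noise)
  have "(\<integral>\<^sup>+\<omega>. ennreal (\<bar>eproc G eps (int i) \<omega> - estar G eps eps' i \<omega>\<bar> powr \<alpha>) \<partial>M)
      \<le> (\<integral>\<^sup>+\<omega>. fA (\<lambda>j\<in>A. noise j \<omega>) * gB (\<lambda>j\<in>- A. noise j \<omega>) \<partial>M)"
    using AE_coupling_contraction[OF \<alpha>, of i] unfolding fA_noise gB_noise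
    by (intro nn_integral_mono_AE) (auto elim!: eventually_mono
        simp: prod_ennreal rat_lip_nonneg ennreal_mult[symmetric] prod_nonneg intro!: ennreal_leI)
  also have "\<dots> = (\<integral>\<^sup>+\<omega>. fA (\<lambda>j\<in>A. noise j \<omega>) \<partial>M) * (\<integral>\<^sup>+\<omega>. gB (\<lambda>j\<in>- A. noise j \<omega>) \<partial>M)"
    by (rule nn_integral_mult_noise_blocks[OF _ fA gB]) simp
  also have "(\<integral>\<^sup>+\<omega>. fA (\<lambda>j\<in>A. noise j \<omega>) \<partial>M) = (\<integral>\<^sup>+z. ennreal (rat_lip R z powr \<alpha>) \<partial>noise_law) ^ i"
    using nn_integral_prod_eps[of "{..<i}" "\<lambda>k. int (Suc k)" "\<lambda>_ z. ennreal (rat_lip R z powr \<alpha>)"]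
    by (simp add: fA_noise inj_on_def)
  finally show ?thesis by (simp only: gB_noise)
qed

lemma nn_integral_powr_coupling_0_finite:
  assumes \<alpha>: "0 < \<alpha>" "\<alpha> \<le> 1"
    and fin: "(\<integral>\<^sup>+\<omega>. ennreal (\<bar>eproc G eps 0 \<omega> - t0\<bar> powr \<alpha>) \<partial>M) < \<infinity>"
  shows "(\<integral>\<^sup>+\<omega>. ennreal (\<bar>eproc G eps 0 \<omega> - estar G eps eps' 0 \<omega>\<bar> powr \<alpha>) \<partial>M) < \<infinity>"
proof -
  have [measurable]: "(\<lambda>x. ennreal (\<bar>x - t0\<bar> powr \<alpha>)) \<in> borel_measurable borel" by measurable
  have "(\<integral>\<^sup>+\<omega>. ennreal (\<bar>estar G eps eps' 0 \<omega> - t0\<bar> powr \<alpha>) \<partial>M)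
      = (\<integral>\<^sup>+x. ennreal (\<bar>x - t0\<bar> powr \<alpha>) \<partial>stationary_law)"
    unfolding distr_estar[of 0, symmetric] by (rule nn_integral_distr[symmetric]) measurable
  also have "\<dots> = (\<integral>\<^sup>+\<omega>. ennreal (\<bar>eproc G eps 0 \<omega> - t0\<bar> powr \<alpha>) \<partial>M)"
    unfolding distr_eproc[of 0, symmetric] by (rule nn_integral_distr) measurable
  finally have same: "(\<integral>\<^sup>+\<omega>. ennreal (\<bar>estar G eps eps' 0 \<omega> - t0\<bar> powr \<alpha>) \<partial>M)
      = (\<integral>\<^sup>+\<omega>. ennreal (\<bar>eproc G eps 0 \<omega> - t0\<bar> powr \<alpha>) \<partial>M)" .
  have "(\<integral>\<^sup>+\<omega>. ennreal (\<bar>eproc G eps 0 \<omega> - estar G eps eps' 0 \<omega>\<bar> powr \<alpha>) \<partial>M)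
      \<le> (\<integral>\<^sup>+\<omega>. ennreal (\<bar>eproc G eps 0 \<omega> - t0\<bar> powr \<alpha>) + ennreal (\<bar>estar G eps eps' 0 \<omega> - t0\<bar> powr \<alpha>) \<partial>M)"
  proof (intro nn_integral_mono)
    fix \<omega>
    have "\<bar>eproc G eps 0 \<omega> - estar G eps eps' 0 \<omega>\<bar> powr \<alpha>
        \<le> (\<bar>eproc G eps 0 \<omega> - t0\<bar> + \<bar>estar G eps eps' 0 \<omega> - t0\<bar>) powr \<alpha>"
      using \<alpha> by (intro powr_mono2) auto
    also have "\<dots> \<le> \<bar>eproc G eps 0 \<omega> - t0\<bar> powr \<alpha> + \<bar>estar G eps eps' 0 \<omega> - t0\<bar> powr \<alpha>"
      using \<alpha> by (intro powr_add_le_add_powr) auto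
    finally show "ennreal (\<bar>eproc G eps 0 \<omega> - estar G eps eps' 0 \<omega>\<bar> powr \<alpha>)
        \<le> ennreal (\<bar>eproc G eps 0 \<omega> - t0\<bar> powr \<alpha>) + ennreal (\<bar>estar G eps eps' 0 \<omega> - t0\<bar> powr \<alpha>)"
      by (simp flip: ennreal_plus)
  qed
  also have "\<dots> = 2 * (\<integral>\<^sup>+\<omega>. ennreal (\<bar>eproc G eps 0 \<omega> - t0\<bar> powr \<alpha>) \<partial>M)"
    by (simp add: nn_integral_add same mult_2)
  also have "\<dots> < \<infinity>" using fin by (simp add: ennreal_mult_less_top)
  finally show ?thesis .
qed

theorem geometric_moment_contraction:
  obtains \<alpha> \<rho> E where "0 < \<alpha>" "\<alpha> \<le> 1" "0 \<le> \<rho>" "\<rho> < 1" "0 \<le> E"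
    "\<And>i. (\<integral>\<^sup>+\<omega>. ennreal (\<bar>eproc G eps (int i) \<omega> - estar G eps eps' i \<omega>\<bar> powr \<alpha>) \<partial>M)
       \<le> ennreal (\<rho> ^ i * E)"
proof -
  obtain \<alpha> where \<alpha>: "0 < \<alpha>" "\<alpha> \<le> 1" "\<alpha> \<le> q"
    and \<rho>: "(\<integral>\<^sup>+z. ennreal (rat_lip R z powr \<alpha>) \<partial>noise_law) < 1"
    by (rule exists_contracting_exponent)
  note c = nn_integral_powr_R_t0_finite[OF \<alpha>]
  obtain \<rho>' where \<rho>': "(\<integral>\<^sup>+z. ennreal (rat_lip R z powr \<alpha>) \<partial>noise_law) = ennreal \<rho>'" "0 \<le> \<rho>'" "\<rho>' < 1"
    using \<rho> by (cases "\<integral>\<^sup>+z. ennreal (rat_lip R z powr \<alpha>) \<partial>noise_law" rule: ennreal_cases) auto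
  have "(\<integral>\<^sup>+\<omega>. ennreal (\<bar>eproc G eps 0 \<omega> - estar G eps eps' 0 \<omega>\<bar> powr \<alpha>) \<partial>M) < \<infinity>"
    using \<alpha>(1,2) nn_integral_powr_eproc_finite[OF \<alpha>(1,2) \<rho> c]
    by (rule nn_integral_powr_coupling_0_finite)
  then obtain E where E: "(\<integral>\<^sup>+\<omega>. ennreal (\<bar>eproc G eps 0 \<omega> - estar G eps eps' 0 \<omega>\<bar> powr \<alpha>) \<partial>M) = ennreal E"
    "0 \<le> E"
    by (cases "\<integral>\<^sup>+\<omega>. ennreal (\<bar>eproc G eps 0 \<omega> - estar G eps eps' 0 \<omega>\<bar> powr \<alpha>) \<partial>M" rule: ennreal_cases)
      auto
  show ?thesis
  proof (rule that[OF \<alpha>(1,2) \<rho>'(2,3) E(2)])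
    show "(\<integral>\<^sup>+\<omega>. ennreal (\<bar>eproc G eps (int i) \<omega> - estar G eps eps' i \<omega>\<bar> powr \<alpha>) \<partial>M)
        \<le> ennreal (\<rho>' ^ i * E)" for i
      using nn_integral_powr_coupling_le[OF \<alpha>(1), of i] \<rho>' E
      by (simp add: ennreal_power ennreal_mult)
  qed
qed

lemma omega_l_le:
  assumes \<alpha>: "0 < \<alpha>" "\<alpha> \<le> 1" and \<rho>: "0 \<le> \<rho>" and E: "0 \<le> E"
    and diff: "\<And>u v. ((\<lambda>v'. F1l M R (eps 0) l u v') has_real_derivative D u v) (at v)"
    and bound_D: "\<And>u v. \<bar>D u v\<bar> \<le> C" and bound_F: "\<And>u v. \<bar>F1l M R (eps 0) l u v\<bar> \<le> C"
    and moment: "(\<integral>\<^sup>+\<omega>. ennreal (\<bar>eproc G eps (int i) \<omega> - estar G eps eps' i \<omega>\<bar> powr \<alpha>) \<partial>M)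
                   \<le> ennreal (\<rho> ^ i * E)"
  shows "0 \<le> omega_l M R G eps eps' l i \<and> omega_l M R G eps eps' l i \<le> 2 * C * sqrt E * sqrt \<rho> ^ i"
proof -
  have "0 \<le> C" using bound_D[of 0 0] by linarith
  then have "C-lipschitz_on UNIV (\<lambda>v. F1l M R (eps 0) l u v)" for u
    using diff bound_D by (intro lipschitz_of_bounded_deriv)
  then have "L2norm M (\<lambda>\<omega>. F1l M R (eps 0) l u (eproc G eps (int i) \<omega>)
      - F1l M R (eps 0) l u (estar G eps eps' i \<omega>)) \<le> 2 * C * sqrt (\<rho> ^ i * E)" for u
    using bound_F \<rho> E moment by (intro L2norm_comp_diff_le[OF _ _ \<alpha>]) auto
  from omega_l_bounds[OF this] show ?thesis
    using \<rho> E by (simp add: real_sqrt_mult real_sqrt_power ac_simps)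
qed

end

theorem proposition5:
  fixes M :: "'a measure" and N :: "'e measure"
    and eps :: "int \<Rightarrow> 'a \<Rightarrow> 'e" and eps' :: "'a \<Rightarrow> 'e"
    and R :: "real \<Rightarrow> 'e \<Rightarrow> real" and G :: "(nat \<Rightarrow> 'e) \<Rightarrow> real"
    and q t0 C0 :: real and p :: nat and D :: "nat \<Rightarrow> real \<Rightarrow> real \<Rightarrow> real"
  assumes M: "prob_space M"
    and indep: "prob_space.indep_vars M (\<lambda>_. N)
                  (\<lambda>j. case j of None \<Rightarrow> eps' | Some i \<Rightarrow> eps i) (UNIV :: int option set)"
    and ident: "\<And>i. distr M N (eps i) = distr M N (eps 0)"
    and ident': "distr M N eps' = distr M N (eps 0)"
    and R_meas: "(\<lambda>(x, z). R x z) \<in> borel_measurable (borel \<Otimes>\<^sub>M N)"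
    and q: "q > 0"
    and lip_fin: "AE \<omega> in M. lipR R (eps 0 \<omega>) < \<infinity>"
    and Lq: "integrable M (\<lambda>\<omega>. (enn2real (lipR R (eps 0 \<omega>)) + \<bar>R t0 (eps 0 \<omega>)\<bar>) powr q)"
    and Elog: "(\<integral>\<^sup>+ \<omega>. log_pos (lipR R (eps 0 \<omega>)) \<partial>M)
                 < (\<integral>\<^sup>+ \<omega>. log_neg (lipR R (eps 0 \<omega>)) \<partial>M)"
    and G_meas: "G \<in> borel_measurable (Pi\<^sub>M UNIV (\<lambda>_. N))"
    and stationary: "\<And>i. AE \<omega> in M. eproc G eps i \<omega> = R (eproc G eps (i - 1) \<omega>) (eps i \<omega>)"
    and F_diff_u: "\<And>l u v. l < p \<Longrightarrow>
          ((\<lambda>u'. F1l M R (eps 0) l u' v) has_real_derivative F1l M R (eps 0) (Suc l) u v) (at u)"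
    and F_diff_v: "\<And>l u v. l \<le> p \<Longrightarrow>
          ((\<lambda>v'. F1l M R (eps 0) l u v') has_real_derivative D l u v) (at v)"
    and F_bdd: "\<And>l. l \<le> p \<Longrightarrow>
          bdd_above (range (\<lambda>(u, v). \<bar>D l u v\<bar>)) \<and>
          bdd_above (range (\<lambda>(u, v). \<bar>F1l M R (eps 0) l u v\<bar>)) \<and>
          (SUP (u, v). \<bar>D l u v\<bar>) + (SUP (u, v). \<bar>F1l M R (eps 0) l u v\<bar>) < C0"
  shows "\<exists>chi. 0 < chi \<and> chi < 1 \<and>
           (\<forall>l \<le> p. (\<lambda>i. omega_l M R G eps eps' l i) \<in> O(\<lambda>i. chi ^ i)
                     \<and> summable (\<lambda>i. omega_l M R G eps eps' l i))"
proof -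
  interpret iterated_random_function M N eps eps' R G q t0
    using M indep ident ident' R_meas q lip_fin Lq Elog G_meas stationary
    by (simp add: iterated_random_function_def iterated_random_function_axioms_def
        iid_noise_def iid_noise_axioms_def)
  obtain \<alpha> \<rho> E where \<alpha>: "0 < \<alpha>" "\<alpha> \<le> 1" and \<rho>: "0 \<le> \<rho>" "\<rho> < 1" and E: "0 \<le> E"
    and contraction: "\<And>i. (\<integral>\<^sup>+\<omega>. ennreal (\<bar>eproc G eps (int i) \<omega> - estar G eps eps' i \<omega>\<bar> powr \<alpha>) \<partial>M)
                           \<le> ennreal (\<rho> ^ i * E)"
    using geometric_moment_contraction by blast
  have omega: "0 \<le> omega_l M R G eps eps' l i
      \<and> omega_l M R G eps eps' l i \<le> 2 * C0 * sqrt E * sqrt \<rho> ^ i" if l: "l \<le> p" for l i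
    using abs_le_of_SUP_abs_add_less[OF F_bdd[OF l]]
    by (intro omega_l_le[OF \<alpha> \<rho>(1) E F_diff_v[OF l] _ _ contraction])
  define chi where "chi = max (sqrt \<rho>) (1 / 2)"
  have chi: "0 < chi" "chi < 1" "sqrt \<rho> \<le> chi" using \<rho> by (auto simp: chi_def)
  show ?thesis
  proof (intro exI[of _ chi] conjI allI impI chi(1,2))
    fix l assume "l \<le> p"
    with omega \<rho> chi show "(\<lambda>i. omega_l M R G eps eps' l i) \<in> O(\<lambda>i. chi ^ i)"
      "summable (\<lambda>i. omega_l M R G eps eps' l i)"
      by (intro bigo_summable_of_geometric_bound[where r = "sqrt \<rho>" and chi = chi
            and K = "2 * C0 * sqrt E"]; simp)+
  qed
qed

end
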